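(* Suppose $\frac n2-\sqrt n<k<\frac n2$. There exist universal constants $C,c>0$ such that $$\inf_{\hat\theta}\ \sup_{\theta\in\mathbb{R},\ \|\gamma\|_0\le k}P_{\theta,\gamma}\left\{|\hat\theta-\theta|>C\sqrt{\log\Big(1+\frac{n}{(n-2k)^2}\Big)}\right\}\ge c,$$ where the infimum is over all estimators (measurable functions of $X_1,\dots,X_n$).
   Context: Model: for an integer $n\ge 2$, observations $X_j=\theta+\gamma_j+ Z_j$, $j=1,\dots,n$ (unit variance), where $\theta\in\mathbb{R}$, $\gamma\in\mathbb{R}^n$ and $Z_1,\dots,Z_n$ are i.i.d. $N(0,1)$; $P_{\theta,\gamma}$ denotes the joint law of $(X_1,\dots,X_n)$. $\|\gamma\|_0=\#\{j:\gamma_j\neq 0\}$. *)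

theory Defs
  imports "HOL-Probability.Probability"
begin

text \<open>Joint law P_{theta,gamma} of X_j = theta + gamma_j + Z_j, j = 0..n-1, Z_j iid N(0,1).
  Vectors in R^n are functions nat => real restricted to the index set {0..<n}.\<close>
definition obs_model :: "nat \<Rightarrow> real \<Rightarrow> (nat \<Rightarrow> real) \<Rightarrow> (nat \<Rightarrow> real) measure" where
  "obs_model n \<theta> \<gamma> = PiM {0..<n} (\<lambda>j. density lborel (normal_density (\<theta> + \<gamma> j) 1))"

definition l0norm :: "nat \<Rightarrow> (nat \<Rightarrow> real) \<Rightarrow> nat" where
  "l0norm n \<gamma> = card {j \<in> {0..<n}. \<gamma> j \<noteq> 0}"

end

theory Submission
  imports Defs
begin

text \<open>Compare the hypotheses \<theta> = 0, \<gamma> = \<delta> on a k-set S and \<theta> = \<delta>, \<gamma> = -\<delta> on a k-set Q.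
  If 2 t < \<delta>, an estimate errs by more than t under one of them,
  so the error probabilities of the uniform mixtures over S and over Q add up to at least the
  overlap of the two mixtures. Splitting N(0,1) and N(\<delta>,1) into a common part of mass s plus
  remainders and expanding the product densities, a set E of coordinates drawn from the common part
  contributes to both mixtures as soon as card (S \<inter> E) + m \<le> card (E - S), where m = n - 2 k.
  Hence the overlap is at least the probability that a + m \<le> b + c for independent
  a, b ~ Bin(k, s) and c ~ Bin(m, s). Depending on n/m^2 and n, the separation \<delta> and the level s
  are chosen so that this probability is at least 3/16 while \<delta> exceeds
  2 * 10^-17 * sqrt (ln (1 + n/m^2)).\<close>

section \<open>Gaussian densities\<close>

lemma nn_integral_normal_density:
  assumes "0 < \<sigma>"
  shows "(\<integral>\<^sup>+x. ennreal (normal_density \<mu> \<sigma> x) \<partial>lborel) = 1"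
proof -
  interpret prob_space "density lborel (normal_density \<mu> \<sigma>)"
    using assms by (rule prob_space_normal_density)
  show ?thesis
    using emeasure_space_1 by (simp add: emeasure_density)
qed

lemma PiM_normal_density_eq_density:
  fixes I :: "'i set" and \<mu> :: "'i \<Rightarrow> real"
  assumes "finite I" and "0 < \<sigma>"
  shows "PiM I (\<lambda>j. density lborel (normal_density (\<mu> j) \<sigma>)) =
    density (PiM I (\<lambda>_. lborel)) (\<lambda>x. \<Prod>j\<in>I. ennreal (normal_density (\<mu> j) \<sigma> (x j)))"
proof -
  interpret ps: product_sigma_finite "\<lambda>j. density lborel (normal_density (\<mu> j) \<sigma>)"
    unfolding product_sigma_finite_def
    using prob_space_imp_sigma_finite[OF prob_space_normal_density[OF assms(2)]] by blast
  interpret pl: product_sigma_finite "\<lambda>_::'i. lborel::real measure"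
    by unfold_locales
  show ?thesis
  proof (rule ps.PiM_eqI[symmetric, OF assms(1)])
    show "sets (density (PiM I (\<lambda>_. lborel)) (\<lambda>x. \<Prod>j\<in>I. ennreal (normal_density (\<mu> j) \<sigma> (x j))))
       = sets (PiM I (\<lambda>j. density lborel (normal_density (\<mu> j) \<sigma>)))"
      by (auto intro!: sets_PiM_cong)
    fix A assume A: "\<And>i. i \<in> I \<Longrightarrow> A i \<in> sets (density lborel (normal_density (\<mu> i) \<sigma>))"
    then have Am: "A i \<in> sets borel" if "i \<in> I" for i using that by simp
    have "emeasure (density (PiM I (\<lambda>_. lborel)) (\<lambda>x. \<Prod>j\<in>I. ennreal (normal_density (\<mu> j) \<sigma> (x j)))) (PiE I A)
       = (\<integral>\<^sup>+x. (\<Prod>j\<in>I. ennreal (normal_density (\<mu> j) \<sigma> (x j))) * indicator (PiE I A) x \<partial>PiM I (\<lambda>_. lborel))"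
      using Am by (intro emeasure_density sets_PiM_I_finite assms(1)) auto
    also have "\<dots> = (\<integral>\<^sup>+x. (\<Prod>j\<in>I. ennreal (normal_density (\<mu> j) \<sigma> (x j)) * indicator (A j) (x j)) \<partial>PiM I (\<lambda>_. lborel))"
      using assms(1) by (intro nn_integral_cong) (simp add: prod.distrib indicator_def space_PiM PiE_iff)
    also have "\<dots> = (\<Prod>j\<in>I. \<integral>\<^sup>+y. ennreal (normal_density (\<mu> j) \<sigma> y) * indicator (A j) y \<partial>lborel)"
      using Am by (intro pl.product_nn_integral_prod assms(1)) auto
    also have "\<dots> = (\<Prod>j\<in>I. emeasure (density lborel (normal_density (\<mu> j) \<sigma>)) (A j))"
      using Am by (intro prod.cong refl) (simp add: emeasure_density)
    finally show "emeasure (density (PiM I (\<lambda>_. lborel)) (\<lambda>x. \<Prod>j\<in>I. ennreal (normal_density (\<mu> j) \<sigma> (x j)))) (PiE I A)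
      = (\<Prod>j\<in>I. emeasure (density lborel (normal_density (\<mu> j) \<sigma>)) (A j))" .
  qed
qed

lemma normal_density_le_half: "normal_density \<mu> 1 x \<le> 1/2"
proof -
  have "2 \<le> sqrt (2 * pi)"
    using pi_gt3 by (simp add: real_le_rsqrt)
  moreover have "exp (- (x - \<mu>)\<^sup>2 / 2) \<le> 1" by simp
  ultimately have "exp (- (x - \<mu>)\<^sup>2 / 2) * 2 \<le> sqrt (2 * pi)" by linarith
  then have "exp (- (x - \<mu>)\<^sup>2 / 2) / sqrt (2 * pi) \<le> 1/2"
    by (simp add: divide_simps)
  then show ?thesis by (simp add: normal_density_def)
qed

lemma normal_density_antimono:
  assumes "(x - \<mu>)\<^sup>2 \<le> (y - \<nu>)\<^sup>2"
  shows "normal_density \<nu> 1 y \<le> normal_density \<mu> 1 x"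
  using assms by (simp add: normal_density_def divide_right_mono)

lemma std_normal_density_ge_exp:
  assumes "0 \<le> L"
  shows "exp (- L / 4) / 9 \<le> normal_density 0 1 (sqrt L / 2 + 1)"
proof -
  have "sqrt L \<le> L / 4 + 1"
    using assms zero_le_power2[of "sqrt L / 2 - 1"] by (simp add: power2_eq_square field_simps)
  then have "(sqrt L / 2 + 1)\<^sup>2 \<le> L / 2 + 2"
    using assms by (simp add: power2_eq_square field_simps)
  then have e: "exp (- L / 4 - 1) \<le> exp (- (sqrt L / 2 + 1)\<^sup>2 / 2)" by simp
  have "sqrt (2 * pi) \<le> sqrt (3\<^sup>2)"
    using pi_less_4 by (intro real_sqrt_le_mono) simp
  then have pi3: "sqrt (2 * pi) \<le> 3" by simp
  have "exp (- L / 4) / 9 = (exp (- L / 4) / 3) / 3" by simp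
  also have "\<dots> \<le> exp (- L / 4 - 1) / 3"
    unfolding exp_diff using exp_le by (intro divide_right_mono divide_left_mono) auto
  also have "\<dots> \<le> exp (- (sqrt L / 2 + 1)\<^sup>2 / 2) / sqrt (2 * pi)"
    using e pi3 by (intro frac_le) auto
  also have "\<dots> = normal_density 0 1 (sqrt L / 2 + 1)" by (simp add: normal_density_def)
  finally show ?thesis .
qed

definition min_normal_density :: "real \<Rightarrow> real \<Rightarrow> real" where
  "min_normal_density \<delta> x = min (normal_density 0 1 x) (normal_density \<delta> 1 x)"

lemma min_normal_density_measurable[measurable]: "min_normal_density \<delta> \<in> borel_measurable borel"
  unfolding min_normal_density_def by measurable

lemma min_normal_density_bounds:
  "0 \<le> min_normal_density \<delta> y" "min_normal_density \<delta> y \<le> normal_density 0 1 y"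
  "min_normal_density \<delta> y \<le> normal_density \<delta> 1 y"
  by (auto simp: min_normal_density_def)

lemma nn_integral_min_normal_density_ge_density:
  assumes "0 \<le> \<delta>"
  shows "ennreal (normal_density 0 1 (\<delta>/2 + 1)) \<le> (\<integral>\<^sup>+x. ennreal (min_normal_density \<delta> x) \<partial>lborel)"
proof -
  have "ennreal (normal_density 0 1 (\<delta>/2 + 1)) * indicator {\<delta>/2..\<delta>/2 + 1} x \<le> ennreal (min_normal_density \<delta> x)" for x
  proof (cases "x \<in> {\<delta>/2..\<delta>/2 + 1}")
    case True
    then have "(x - 0)\<^sup>2 \<le> (\<delta>/2 + 1 - 0)\<^sup>2" "(x - \<delta>)\<^sup>2 \<le> (\<delta>/2 + 1 - 0)\<^sup>2"
      using assms by (auto simp: abs_le_square_iff[symmetric])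
    then show ?thesis
      using True by (simp add: min_normal_density_def normal_density_antimono)
  qed simp
  then have "(\<integral>\<^sup>+x. ennreal (normal_density 0 1 (\<delta>/2 + 1)) * indicator {\<delta>/2..\<delta>/2 + 1} x \<partial>lborel)
      \<le> (\<integral>\<^sup>+x. ennreal (min_normal_density \<delta> x) \<partial>lborel)"
    by (rule nn_integral_mono)
  then show ?thesis by (simp add: nn_integral_cmult_indicator)
qed

lemma nn_integral_min_normal_density_plus_ge:
  assumes "0 \<le> \<delta>"
  shows "1 \<le> (\<integral>\<^sup>+x. ennreal (min_normal_density \<delta> x) \<partial>lborel) + ennreal (\<delta>/2)"
proof -
  let ?p = "\<lambda>x. ennreal (normal_density 0 1 x)"
  have split_min: "(\<integral>\<^sup>+x. ennreal (min_normal_density \<delta> x) \<partial>lborel) =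
     (\<integral>\<^sup>+x. ?p x * indicator {\<delta>/2..} x + ennreal (normal_density \<delta> 1 x) * indicator {..<\<delta>/2} x \<partial>lborel)"
  proof (rule nn_integral_cong)
    fix x
    show "ennreal (min_normal_density \<delta> x) = ?p x * indicator {\<delta>/2..} x + ennreal (normal_density \<delta> 1 x) * indicator {..<\<delta>/2} x"
    proof (cases "\<delta>/2 \<le> x")
      case True
      then have "(x - \<delta>)\<^sup>2 \<le> (x - 0)\<^sup>2" using assms by (simp add: abs_le_square_iff[symmetric])
      then have "normal_density 0 1 x \<le> normal_density \<delta> 1 x" by (rule normal_density_antimono)
      then show ?thesis using True by (simp add: min_normal_density_def indicator_def)
    next
      case False
      then have "(x - 0)\<^sup>2 \<le> (x - \<delta>)\<^sup>2" using assms by (simp add: abs_le_square_iff[symmetric])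
      then have "normal_density \<delta> 1 x \<le> normal_density 0 1 x" by (rule normal_density_antimono)
      then show ?thesis using False by (simp add: min_normal_density_def indicator_def min_def)
    qed
  qed
  have shift: "(\<integral>\<^sup>+x. ennreal (normal_density \<delta> 1 x) * indicator {..<\<delta>/2} x \<partial>lborel)
     = (\<integral>\<^sup>+x. ?p x * indicator {..<-\<delta>/2} x \<partial>lborel)"
  proof -
    have "(\<integral>\<^sup>+x. ennreal (normal_density \<delta> 1 x) * indicator {..<\<delta>/2} x \<partial>lborel)
       = (\<integral>\<^sup>+x. ennreal (normal_density \<delta> 1 (\<delta> + x)) * indicator {..<\<delta>/2} (\<delta> + x) \<partial>lborel)"
      using nn_integral_real_affine[of "\<lambda>x. ennreal (normal_density \<delta> 1 x) * indicator {..<\<delta>/2} x" 1 \<delta>]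
      by simp
    also have "\<dots> = (\<integral>\<^sup>+x. ?p x * indicator {..<-\<delta>/2} x \<partial>lborel)"
      by (intro nn_integral_cong) (auto simp: normal_density_def indicator_def)
    finally show ?thesis .
  qed
  have "1 = (\<integral>\<^sup>+x. ?p x \<partial>lborel)" by (simp add: nn_integral_normal_density)
  also have "\<dots> = (\<integral>\<^sup>+x. ?p x * indicator {\<delta>/2..} x + ?p x * indicator {..<-\<delta>/2} x
        + ?p x * indicator {-\<delta>/2..<\<delta>/2} x \<partial>lborel)"
    using assms by (intro nn_integral_cong) (auto simp: indicator_def)
  also have "\<dots> = (\<integral>\<^sup>+x. ?p x * indicator {\<delta>/2..} x \<partial>lborel) + (\<integral>\<^sup>+x. ?p x * indicator {..<-\<delta>/2} x \<partial>lborel)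
        + (\<integral>\<^sup>+x. ?p x * indicator {-\<delta>/2..<\<delta>/2} x \<partial>lborel)"
    by (simp add: nn_integral_add)
  also have "(\<integral>\<^sup>+x. ?p x * indicator {-\<delta>/2..<\<delta>/2} x \<partial>lborel)
      \<le> (\<integral>\<^sup>+x. ennreal (1/2) * indicator {-\<delta>/2..<\<delta>/2} x \<partial>lborel)"
    using ennreal_leI[OF normal_density_le_half] by (intro nn_integral_mono) (auto simp: indicator_def)
  also have "\<dots> = ennreal (\<delta>/2)"
    using assms ennreal_divide_numeral[of \<delta> "num.Bit0 num.One"]
    by (simp add: nn_integral_cmult_indicator divide_ennreal_def mult.commute)
  also have "(\<integral>\<^sup>+x. ?p x * indicator {\<delta>/2..} x \<partial>lborel) + (\<integral>\<^sup>+x. ?p x * indicator {..<-\<delta>/2} x \<partial>lborel)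
      = (\<integral>\<^sup>+x. ennreal (min_normal_density \<delta> x) \<partial>lborel)"
    unfolding split_min shift[symmetric] by (simp add: nn_integral_add)
  finally show ?thesis by (simp add: add_left_mono)
qed

lemma nn_integral_min_normal_density_finite:
  obtains r where "(\<integral>\<^sup>+x. ennreal (min_normal_density \<delta> x) \<partial>lborel) = ennreal r" "0 \<le> r" "r \<le> 1"
proof -
  define M where "M = (\<integral>\<^sup>+x. ennreal (min_normal_density \<delta> x) \<partial>lborel)"
  have "M \<le> (\<integral>\<^sup>+x. ennreal (normal_density 0 1 x) \<partial>lborel)"
    unfolding M_def by (intro nn_integral_mono) (simp add: min_normal_density_bounds)
  then have "M \<le> 1" by (simp add: nn_integral_normal_density)
  then have "M \<noteq> \<top>"
    using ennreal_one_less_top by (metis top.not_eq_extremum order.strict_trans1)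
  moreover obtain r where "M = ennreal r" "0 \<le> r"
    using \<open>M \<noteq> \<top>\<close> by (cases M) auto
  ultimately show ?thesis using that \<open>M \<le> 1\<close> unfolding M_def by auto
qed

lemma nn_integral_min_normal_density_ge:
  assumes "0 \<le> \<delta>" and "s \<le> 1 - \<delta>/2"
  shows "ennreal s \<le> (\<integral>\<^sup>+x. ennreal (min_normal_density \<delta> x) \<partial>lborel)"
proof -
  obtain r where r: "(\<integral>\<^sup>+x. ennreal (min_normal_density \<delta> x) \<partial>lborel) = ennreal r" "0 \<le> r"
    by (rule nn_integral_min_normal_density_finite)
  have "ennreal 1 \<le> ennreal r + ennreal (\<delta>/2)"
    using nn_integral_min_normal_density_plus_ge[OF assms(1)] unfolding r(1) by simp
  also have "\<dots> = ennreal (r + \<delta>/2)"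
    using r(2) assms(1) by (intro ennreal_plus[symmetric]) auto
  finally have "1 \<le> r + \<delta>/2"
    using r(2) assms(1) by (subst (asm) ennreal_le_iff) auto
  then show ?thesis
    using assms(2) unfolding r(1) by (intro ennreal_leI) linarith
qed

section \<open>Binomial weights\<close>

definition binom_prob :: "nat \<Rightarrow> real \<Rightarrow> nat \<Rightarrow> real" where
  "binom_prob k p i = real (k choose i) * p ^ i * (1 - p) ^ (k - i)"

lemma sum_binom_prob: "(\<Sum>i\<le>k. binom_prob k p i) = 1"
  using binomial_ring[of p "1 - p" k] by (simp add: binom_prob_def)

lemma binom_prob_nonneg: "0 \<le> p \<Longrightarrow> p \<le> 1 \<Longrightarrow> 0 \<le> binom_prob k p i"
  by (simp add: binom_prob_def)

lemma binom_prob_pos: "0 < p \<Longrightarrow> p < 1 \<Longrightarrow> i \<le> k \<Longrightarrow> 0 < binom_prob k p i"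
  by (simp add: binom_prob_def)

lemma binom_prob_Suc_ratio:
  assumes "i < k"
  shows "binom_prob k p (Suc i) * (real (Suc i) * (1 - p)) = binom_prob k p i * (real (k - i) * p)"
proof -
  obtain k' where k: "k = Suc k'" using assms by (cases k) auto
  have "(k choose Suc i) * Suc i = (k - i) * (k choose i)"
    using Suc_times_binomial_eq[of k' i] binomial_absorb_comp[of k i] k by (simp add: mult.commute)
  then have c: "real (k choose Suc i) * real (Suc i) = real (k choose i) * real (k - i)"
    by (metis of_nat_mult mult.commute)
  have e: "(1 - p) ^ (k - i) = (1 - p) ^ (k - Suc i) * (1 - p)"
    using assms by (metis Suc_diff_Suc power_Suc2)
  have "binom_prob k p (Suc i) * (real (Suc i) * (1 - p))
      = (real (k choose Suc i) * real (Suc i)) * p ^ i * p * ((1 - p) ^ (k - Suc i) * (1 - p))"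
    unfolding binom_prob_def by (simp add: algebra_simps)
  also have "\<dots> = binom_prob k p i * (real (k - i) * p)"
    unfolding c binom_prob_def e by (simp add: algebra_simps)
  finally show ?thesis .
qed

lemma binom_prob_mode_le:
  assumes "0 < p" "p < 1" and mode: "\<And>i. i \<le> k \<Longrightarrow> binom_prob k p i \<le> binom_prob k p M"
    and "M \<le> k"
  shows "real M \<le> (real k + 1) * p"
proof (cases M)
  case (Suc M')
  then have "M' < k" using \<open>M \<le> k\<close> by simp
  have "binom_prob k p M * (real M * (1 - p)) = binom_prob k p M' * (real (k - M') * p)"
    using binom_prob_Suc_ratio[OF \<open>M' < k\<close>, of p] Suc by simp
  also have "\<dots> \<le> binom_prob k p M * (real (k - M') * p)"
    using mode[of M'] \<open>M' < k\<close> assms(1) by (intro mult_right_mono) auto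
  finally have "real M * (1 - p) \<le> real (k - M') * p"
    using binom_prob_pos[OF assms(1,2) \<open>M \<le> k\<close>] by simp
  moreover have "real (k - M') = real k + 1 - real M" using \<open>M' < k\<close> Suc by simp
  ultimately show ?thesis by (simp add: algebra_simps)
qed (use assms in simp)

lemma binom_prob_Suc_ge_near_mode:
  fixes k w M i :: nat and p :: real
  defines "a \<equiv> (real k + 1) * p * (1 - p)"
  assumes p: "0 < p" "p < 1" and w: "1 \<le> w" "4 * real w \<le> a"
    and M: "real M \<le> (real k + 1) * p" and i: "M \<le> i" "i < M + w"
  shows "i < k \<and> (1 - 2 * real w / a) * binom_prob k p i \<le> binom_prob k p (Suc i)"
proof -
  have a_pos: "0 < a" using w by simp
  have "a \<le> (real k + 1) * (1 - p)"
    using p by (simp add: a_def mult_le_cancel_right1 mult.assoc mult_left_le)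
  have ki: "(real k + 1) * (1 - p) - real w \<le> real (k - i)"
    using M i by (simp add: algebra_simps of_nat_diff)
  moreover have "0 < (real k + 1) * (1 - p) - real w"
    using \<open>a \<le> (real k + 1) * (1 - p)\<close> w by linarith
  ultimately have "i < k" by linarith
  have key: "(1 - 2 * real w / a) * (real (Suc i) * (1 - p)) \<le> real (k - i) * p"
  proof -
    have "real (Suc i) \<le> (real k + 1) * p + real w" using M i by simp
    then have "(1 - 2 * real w / a) * (real (Suc i) * (1 - p))
        \<le> (1 - 2 * real w / a) * (((real k + 1) * p + real w) * (1 - p))"
      using p w a_pos by (intro mult_left_mono mult_right_mono) (auto simp: field_simps)
    also have "\<dots> = a + real w * (1 - p) - 2 * real w - 2 * (real w)\<^sup>2 * (1 - p) / a"
      using a_pos by (simp add: a_def field_simps power2_eq_square)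
    also have "\<dots> \<le> a - real w * p"
      using a_pos p w by (simp add: algebra_simps)
    also have "\<dots> = ((real k + 1) * (1 - p) - real w) * p"
      by (simp add: a_def algebra_simps)
    also have "\<dots> \<le> real (k - i) * p"
      using ki p by (intro mult_right_mono) auto
    finally show ?thesis .
  qed
  have "binom_prob k p i * ((1 - 2 * real w / a) * (real (Suc i) * (1 - p)))
      \<le> binom_prob k p (Suc i) * (real (Suc i) * (1 - p))"
    using mult_left_mono[OF key binom_prob_nonneg[of p k i]] p binom_prob_Suc_ratio[OF \<open>i < k\<close>, of p]
    by simp
  then have "((1 - 2 * real w / a) * binom_prob k p i) * (real (Suc i) * (1 - p))
      \<le> binom_prob k p (Suc i) * (real (Suc i) * (1 - p))"
    by (simp add: ac_simps)
  then show ?thesis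
    using \<open>i < k\<close> p by (simp add: mult_le_cancel_right)
qed

lemma binom_prob_ge_power_near_mode:
  fixes k w M j :: nat and p :: real
  defines "a \<equiv> (real k + 1) * p * (1 - p)"
  assumes p: "0 < p" "p < 1" and w: "1 \<le> w" "4 * real w \<le> a"
    and M: "M \<le> k" "real M \<le> (real k + 1) * p" and "j \<le> w"
  shows "M + j \<le> k \<and> (1 - 2 * real w / a) ^ j * binom_prob k p M \<le> binom_prob k p (M + j)"
  using \<open>j \<le> w\<close>
proof (induction j)
  case (Suc j)
  then have IH: "M + j \<le> k" "(1 - 2 * real w / a) ^ j * binom_prob k p M \<le> binom_prob k p (M + j)" by auto
  have step: "M + j < k" "(1 - 2 * real w / a) * binom_prob k p (M + j) \<le> binom_prob k p (Suc (M + j))"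
    using binom_prob_Suc_ge_near_mode[OF p w(1) _ M(2), of "M + j"] w(2) Suc.prems by (auto simp: a_def)
  have "0 \<le> 1 - 2 * real w / a" using w by (simp add: field_simps)
  then have "(1 - 2 * real w / a) ^ Suc j * binom_prob k p M \<le> (1 - 2 * real w / a) * binom_prob k p (M + j)"
    using mult_left_mono[OF IH(2)] by (simp add: mult.assoc)
  then show ?case using step by simp
qed (use M in simp)

text \<open>On the w indices to the right of the mode M the weights stay above half the maximal
  weight, and they sum to at most 1.\<close>

lemma binom_prob_le:
  fixes w :: nat
  assumes p: "0 < p" "p < 1" and w: "1 \<le> w" "4 * (real w)\<^sup>2 \<le> (real k + 1) * p * (1 - p)"
  shows "binom_prob k p i \<le> 2 / real w"
proof -
  define a where "a = (real k + 1) * p * (1 - p)"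
  define f where "f = binom_prob k p"
  have f0: "0 \<le> f i" for i using p by (simp add: f_def binom_prob_nonneg)
  have "4 * real w \<le> 4 * (real w)\<^sup>2" using w by (simp add: power2_eq_square)
  then have w_a: "4 * real w \<le> a" using w unfolding a_def by linarith
  then have a_pos: "0 < a" using w by simp
  obtain M where M: "M \<le> k" "\<And>i. i \<le> k \<Longrightarrow> f i \<le> f M"
    using Max_in[of "f ` {..k}"] Max_ge[of "f ` {..k}"] by fastforce
  have M_le: "real M \<le> (real k + 1) * p"
    using binom_prob_mode_le[OF p _ M(1)] M(2) by (simp add: f_def)
  have decay: "M + j \<le> k \<and> (1 - 2 * real w / a) ^ j * f M \<le> f (M + j)" if "j \<le> w" for j
    using binom_prob_ge_power_near_mode[OF p w(1) _ M(1) M_le that] w_a by (simp add: a_def f_def)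
  have half: "f M / 2 \<le> f (M + j)" if "j < w" for j
  proof -
    have "1 - real j * (2 * real w / a) \<le> (1 - 2 * real w / a) ^ j"
      using Bernoulli_inequality[of "- (2 * real w / a)" j] w_a a_pos by (simp add: field_simps)
    moreover have "real j * (2 * real w / a) \<le> 2 * (real w)\<^sup>2 / a"
      using that a_pos by (simp add: divide_right_mono power2_eq_square)
    moreover have "2 * (real w)\<^sup>2 / a \<le> 1/2"
      using w a_pos by (simp add: a_def field_simps)
    ultimately have "1/2 * f M \<le> (1 - 2 * real w / a) ^ j * f M"
      using f0[of M] by (intro mult_right_mono) auto
    then show ?thesis using decay[of j] that by simp
  qed
  have "real w * (f M / 2) = (\<Sum>j<w. f M / 2)" by simp
  also have "\<dots> \<le> (\<Sum>j<w. f (M + j))" using half by (intro sum_mono) auto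
  also have "\<dots> = (\<Sum>i\<in>(+) M ` {..<w}. f i)" by (simp add: sum.reindex)
  also have "\<dots> \<le> (\<Sum>i\<le>k. f i)"
    using decay f0 by (intro sum_mono2) auto
  also have "\<dots> = 1" by (simp add: f_def sum_binom_prob)
  finally have "f M \<le> 2 / real w" using w by (simp add: field_simps)
  then show ?thesis
    using M(2)[of i] by (cases "i \<le> k") (auto simp: f_def binom_prob_def binomial_eq_0)
qed

lemma binom_prob_pair_gap_ge:
  assumes p: "0 \<le> p" "p \<le> 1" and P: "\<And>i. binom_prob k p i \<le> P"
  shows "(1 - (2 * real r + 1) * P) / 2 \<le>
    (\<Sum>a\<le>k. \<Sum>b\<le>k. binom_prob k p a * binom_prob k p b * (if a + r \<le> b then 1 else 0))"
proof -
  define f where "f = binom_prob k p"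
  have f0: "0 \<le> f i" for i using p by (simp add: f_def binom_prob_nonneg)
  define S1 where "S1 = (\<Sum>a\<le>k. \<Sum>b\<le>k. f a * f b * (if a + r \<le> b then 1 else 0))"
  define S2 where "S2 = (\<Sum>a\<le>k. \<Sum>b\<le>k. f a * f b * (if b + r \<le> a then 1 else 0))"
  define S3 where "S3 = (\<Sum>a\<le>k. \<Sum>b\<le>k. f a * f b * (if a < b + r \<and> b < a + r then 1 else 0))"
  have "S2 = S1" unfolding S1_def S2_def by (subst sum.swap) (simp add: mult.commute)
  have "1 = (\<Sum>a\<le>k. f a) * (\<Sum>b\<le>k. f b)" by (simp add: f_def sum_binom_prob)
  also have "\<dots> = (\<Sum>a\<le>k. \<Sum>b\<le>k. f a * f b)" by (simp add: sum_product)
  also have "\<dots> \<le> S1 + S2 + S3"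
    unfolding S1_def S2_def S3_def sum.distrib[symmetric] using f0
    by (intro sum_mono) (auto intro: mult_nonneg_nonneg)
  finally have total: "1 \<le> 2 * S1 + S3" using \<open>S2 = S1\<close> by simp
  have near: "(\<Sum>b\<le>k. f b * (if a < b + r \<and> b < a + r then 1 else 0)) \<le> (2 * real r + 1) * P" for a
  proof -
    have "(\<Sum>b\<le>k. f b * (if a < b + r \<and> b < a + r then 1 else 0))
        = (\<Sum>b\<in>{b\<in>{..k}. a < b + r \<and> b < a + r}. f b)"
      by (simp add: sum.inter_filter[symmetric] if_distrib cong: if_cong)
    also have "\<dots> \<le> real (card {b\<in>{..k}. a < b + r \<and> b < a + r}) * P"
      using sum_bounded_above[of "{b\<in>{..k}. a < b + r \<and> b < a + r}" f P] P by (simp add: f_def)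
    also have "\<dots> \<le> (2 * real r + 1) * P"
    proof (rule mult_right_mono)
      have "card {b\<in>{..k}. a < b + r \<and> b < a + r} \<le> card {a - r..a + r}"
        by (intro card_mono) auto
      then show "real (card {b\<in>{..k}. a < b + r \<and> b < a + r}) \<le> 2 * real r + 1" by simp
      show "0 \<le> P" using P[of 0] f0[of 0] by (simp add: f_def)
    qed
    finally show ?thesis .
  qed
  have "S3 = (\<Sum>a\<le>k. f a * (\<Sum>b\<le>k. f b * (if a < b + r \<and> b < a + r then 1 else 0)))"
    unfolding S3_def by (simp add: sum_distrib_left mult.assoc)
  also have "\<dots> \<le> (\<Sum>a\<le>k. f a * ((2 * real r + 1) * P))"
    using near f0 by (intro sum_mono mult_left_mono) auto
  also have "\<dots> = (2 * real r + 1) * P" by (simp add: sum_distrib_right[symmetric] f_def sum_binom_prob)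
  finally show ?thesis using total by (simp add: S1_def f_def)
qed

lemma sum_binom_prob_mean: "(\<Sum>c\<le>m. real c * binom_prob m p c) = real m * p"
proof (cases m)
  case (Suc m')
  have step: "real (Suc c) * binom_prob (Suc m') p (Suc c) = real (Suc m') * p * binom_prob m' p c" for c
  proof -
    have c: "real (Suc c) * real (Suc m' choose Suc c) = real (Suc m') * real (m' choose c)"
      using Suc_times_binomial[of c m'] by (metis of_nat_mult)
    have "real (Suc c) * binom_prob (Suc m') p (Suc c)
        = (real (Suc c) * real (Suc m' choose Suc c)) * (p * p ^ c * (1 - p) ^ (m' - c))"
      unfolding binom_prob_def by (simp add: algebra_simps del: binomial_Suc_Suc of_nat_Suc)
    then show ?thesis unfolding c binom_prob_def by (simp add: algebra_simps)
  qed
  have "(\<Sum>c\<le>Suc m'. real c * binom_prob (Suc m') p c) = (\<Sum>c\<le>m'. real (Suc c) * binom_prob (Suc m') p (Suc c))"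
    by (subst sum.atMost_Suc_shift) simp
  also have "\<dots> = (\<Sum>c\<le>m'. real (Suc m') * p * binom_prob m' p c)"
    by (simp only: step)
  also have "\<dots> = real (Suc m') * p" by (simp add: sum_distrib_left[symmetric] sum_binom_prob)
  finally show ?thesis using Suc by simp
qed simp

lemma binom_prob_tail_ge:
  assumes "0 \<le> p" "p \<le> 1"
  shows "1 - real m * (1 - p) / (real r + 1) \<le> (\<Sum>c\<le>m. binom_prob m p c * (if m \<le> c + r then 1 else 0))"
proof -
  have "(\<Sum>c\<le>m. binom_prob m p c * (if m \<le> c + r then 0 else 1))
      \<le> (\<Sum>c\<le>m. binom_prob m p c * ((real m - real c) / (real r + 1)))"
    using binom_prob_nonneg[OF assms] by (intro sum_mono mult_left_mono) (auto simp: field_simps)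
  also have "\<dots> = (real m * (\<Sum>c\<le>m. binom_prob m p c) - (\<Sum>c\<le>m. real c * binom_prob m p c)) / (real r + 1)"
    by (simp add: sum_divide_distrib[symmetric] sum_distrib_left algebra_simps sum_subtractf)
  also have "\<dots> = real m * (1 - p) / (real r + 1)"
    by (simp add: sum_binom_prob sum_binom_prob_mean algebra_simps)
  finally have "(\<Sum>c\<le>m. binom_prob m p c * (if m \<le> c + r then 0 else 1)) \<le> real m * (1 - p) / (real r + 1)" .
  moreover have "(\<Sum>c\<le>m. binom_prob m p c * (if m \<le> c + r then 1 else 0))
      + (\<Sum>c\<le>m. binom_prob m p c * (if m \<le> c + r then 0 else 1)) = 1"
    by (simp add: sum.distrib[symmetric] sum_binom_prob if_distrib cong: if_cong)
  ultimately show ?thesis by linarith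
qed

definition matching_prob :: "nat \<Rightarrow> nat \<Rightarrow> real \<Rightarrow> real" where
  "matching_prob k m s = (\<Sum>a\<le>k. \<Sum>b\<le>k. \<Sum>c\<le>m.
     binom_prob k s a * binom_prob k s b * binom_prob m s c * (if a + m \<le> b + c then 1 else 0))"

lemma power_le_matching_prob:
  assumes "0 \<le> s" "s \<le> 1"
  shows "s ^ (2 * k + m) \<le> matching_prob k m s"
proof -
  let ?t = "\<lambda>a b c. binom_prob k s a * binom_prob k s b * binom_prob m s c * (if a + m \<le> b + c then 1 else 0)"
  have t0: "0 \<le> ?t a b c" for a b c using binom_prob_nonneg[OF assms] by simp
  have "s ^ (2 * k + m) = ?t k k m"
    by (simp add: binom_prob_def power_add mult_2)
  also have "\<dots> \<le> (\<Sum>c\<le>m. ?t k k c)"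
    using t0 by (intro member_le_sum) auto
  also have "\<dots> \<le> (\<Sum>b\<le>k. \<Sum>c\<le>m. ?t k b c)"
    using t0 by (intro member_le_sum[where f = "\<lambda>b. \<Sum>c\<le>m. ?t k b c"] sum_nonneg) auto
  also have "\<dots> \<le> matching_prob k m s"
    unfolding matching_prob_def
    using t0 by (intro member_le_sum[where f = "\<lambda>a. \<Sum>b\<le>k. \<Sum>c\<le>m. ?t a b c"] sum_nonneg) auto
  finally show ?thesis .
qed

text \<open>If b exceeds a by at least r and c falls short of m by at most r, then a + m \<le> b + c.
  The first event has probability at least 1/4 once the weights of Bin(k,s) are at most 1/(4r+2).\<close>

lemma matching_prob_ge_tail:
  fixes r :: nat
  assumes s: "0 < s" "s < 1" and var: "64 * (2 * real r + 1)\<^sup>2 \<le> (real k + 1) * s * (1 - s)"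
  shows "(\<Sum>c\<le>m. binom_prob m s c * (if m \<le> c + r then 1 else 0)) / 4 \<le> matching_prob k m s"
proof -
  let ?gap = "\<Sum>a\<le>k. \<Sum>b\<le>k. binom_prob k s a * binom_prob k s b * (if a + r \<le> b then 1 else 0)"
  let ?tail = "\<Sum>c\<le>m. binom_prob m s c * (if m \<le> c + r then 1 else 0)"
  define w where "w = 4 * (2 * r + 1)"
  have w: "1 \<le> w" "4 * (real w)\<^sup>2 \<le> (real k + 1) * s * (1 - s)"
    using var by (simp_all add: w_def power2_eq_square algebra_simps)
  have "1/4 = (1 - (2 * real r + 1) * (2 / real w)) / 2" by (simp add: w_def field_simps)
  also have "\<dots> \<le> ?gap"
    using s by (intro binom_prob_pair_gap_ge binom_prob_le[OF s w]) auto
  finally have gap: "1/4 \<le> ?gap" .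
  have "0 \<le> ?tail" using s binom_prob_nonneg by (intro sum_nonneg) auto
  then have "?tail / 4 \<le> ?tail * ?gap"
    using mult_left_mono[OF gap] by simp
  also have "\<dots> = (\<Sum>a\<le>k. \<Sum>b\<le>k. \<Sum>c\<le>m. binom_prob k s a * binom_prob k s b * binom_prob m s c
      * ((if a + r \<le> b then 1 else 0) * (if m \<le> c + r then 1 else 0)))"
    by (simp add: sum_distrib_left sum_distrib_right algebra_simps)
  also have "\<dots> \<le> matching_prob k m s"
    unfolding matching_prob_def using s binom_prob_nonneg
    by (intro sum_mono mult_left_mono) (auto intro!: mult_nonneg_nonneg)
  finally show ?thesis .
qed

section \<open>Counting subsets\<close>

lemma card_subsets_with_diff:
  assumes "finite I" "E \<subseteq> I" "T \<subseteq> I - E" "card T \<le> j"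
  shows "card {S. S \<subseteq> I \<and> card S = j \<and> S - E = T} = card E choose (j - card T)"
proof -
  have fin: "finite E" "finite T"
    using finite_subset[OF assms(2,1)] finite_subset[OF assms(3)] assms(1) by auto
  have "{S. S \<subseteq> I \<and> card S = j \<and> S - E = T} = (\<union>) T ` {U. U \<subseteq> E \<and> card U = j - card T}"
  proof (intro set_eqI iffI)
    fix S assume S: "S \<in> {S. S \<subseteq> I \<and> card S = j \<and> S - E = T}"
    then have "S = T \<union> (S \<inter> E)" "T \<inter> (S \<inter> E) = {}" by auto
    moreover have "finite (S \<inter> E)" using fin by simp
    ultimately have "card S = card T + card (S \<inter> E)" using fin card_Un_disjoint by metis
    then show "S \<in> (\<union>) T ` {U. U \<subseteq> E \<and> card U = j - card T}"
      using S \<open>S = T \<union> (S \<inter> E)\<close> by (intro image_eqI[of _ _ "S \<inter> E"]) auto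
  next
    fix S assume "S \<in> (\<union>) T ` {U. U \<subseteq> E \<and> card U = j - card T}"
    then obtain U where U: "U \<subseteq> E" "card U = j - card T" "S = T \<union> U" by auto
    have "card S = card T + card U"
      unfolding U(3) using fin assms(3) finite_subset[OF U(1) fin(1)] U(1) by (intro card_Un_disjoint) auto
    then show "S \<in> {S. S \<subseteq> I \<and> card S = j \<and> S - E = T}" using U assms by auto
  qed
  moreover have "inj_on ((\<union>) T) {U. U \<subseteq> E \<and> card U = j - card T}"
    using assms(3) by (auto simp: inj_on_def)
  ultimately show ?thesis using fin by (simp add: card_image n_subsets)
qed

lemma binomial_le_binomial_add:
  assumes "2 * j + m \<le> e"
  shows "e choose j \<le> e choose (j + m)"
proof (cases "2 * (j + m) \<le> e")
  case False
  then have "e choose j \<le> e choose (e - (j + m))" using assms by (intro binomial_mono) auto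
  also have "\<dots> = e choose (j + m)" using assms by (intro binomial_symmetric[symmetric]) auto
  finally show ?thesis .
qed (auto intro: binomial_mono)

lemma card_subsets_with_diff_le:
  assumes "finite I" "E \<subseteq> I" "T \<subseteq> I - E" and room: "(k - card T) + m \<le> card E - (k - card T)"
  shows "card {S. S \<subseteq> I \<and> card S = k \<and> S - E = T} \<le> card {S. S \<subseteq> I \<and> card S = k + m \<and> S - E = T}"
proof (cases "card T \<le> k")
  case True
  have "card E choose (k - card T) \<le> card E choose (k - card T + m)"
    using True room by (intro binomial_le_binomial_add) linarith
  then show ?thesis
    using True card_subsets_with_diff[OF assms(1-3)] by (simp add: add.commute[of m])
next
  case False
  have empty: "{S. S \<subseteq> I \<and> card S = k \<and> S - E = T} = {}"
  proof (rule ccontr)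
    assume "{S. S \<subseteq> I \<and> card S = k \<and> S - E = T} \<noteq> {}"
    then obtain S where S: "S \<subseteq> I" "card S = k" "S - E = T" by auto
    then have "card (S - E) \<le> card S" using assms(1) by (intro card_mono) (auto intro: finite_subset)
    then show False using S False by simp
  qed
  show ?thesis unfolding empty by simp
qed

text \<open>A k-subset S of I leaves at least m more elements of E free than it uses when
  card (S \<inter> E) + m \<le> card (E - S); then, sorted by their trace S - E outside E, such subsets
  are at most as numerous as the (k + m)-subsets with the same trace.\<close>

lemma sum_subsets_trace_le:
  fixes I E :: "'a set" and G :: "'a set \<Rightarrow> real"
  assumes fin: "finite I" and EI: "E \<subseteq> I" and G0: "\<And>T. 0 \<le> G T"
  shows "(\<Sum>S\<in>{S. S \<subseteq> I \<and> card S = k}. if card (S \<inter> E) + m \<le> card (E - S) then G (S - E) else 0)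
     \<le> (\<Sum>S\<in>{S. S \<subseteq> I \<and> card S = k + m}. G (S - E))"
proof -
  let ?A = "\<lambda>j. {S. S \<subseteq> I \<and> card S = j}"
  let ?fiber = "\<lambda>j T. {S. S \<in> ?A j \<and> S - E = T}"
  have finE: "finite E" using fin EI finite_subset by auto
  have fiber_le: "(\<Sum>S\<in>?fiber k T. if card (S \<inter> E) + m \<le> card (E - S) then G (S - E) else 0)
      \<le> (\<Sum>S\<in>?fiber (k + m) T. G (S - E))" if T: "T \<in> Pow (I - E)" for T
  proof -
    define room where "room \<longleftrightarrow> (k - card T) + m \<le> card E - (k - card T)"
    have "(\<Sum>S\<in>?fiber k T. if card (S \<inter> E) + m \<le> card (E - S) then G (S - E) else 0)
        = (\<Sum>S\<in>?fiber k T. if room then G T else 0)"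
    proof (rule sum.cong)
      fix S assume S: "S \<in> ?fiber k T"
      then have "S = T \<union> (S \<inter> E)" "T \<inter> (S \<inter> E) = {}" "finite S" using fin finite_subset by auto
      then have "card S = card T + card (S \<inter> E)"
        using card_Un_disjoint[of T "S \<inter> E"] by (metis finite_Un)
      moreover have "card (E - S) = card E - card (S \<inter> E)"
        using card_Diff_subset_Int[of E S] finE by (simp add: Int_commute)
      ultimately have "card (S \<inter> E) = k - card T" "card (E - S) = card E - (k - card T)"
        using S by auto
      then show "(if card (S \<inter> E) + m \<le> card (E - S) then G (S - E) else 0) = (if room then G T else 0)"
        using S unfolding room_def by simp
    qed simp
    also have "\<dots> = real (card (?fiber k T)) * (if room then G T else 0)" by simp
    also have "\<dots> \<le> real (card (?fiber (k + m) T)) * G T"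
      using card_subsets_with_diff_le[OF fin EI, of T k m] T G0[of T]
      by (auto simp: room_def intro: mult_right_mono)
    also have "\<dots> = (\<Sum>S\<in>?fiber (k + m) T. G (S - E))" by simp
    finally show ?thesis .
  qed
  have "(\<Sum>S\<in>?A k. if card (S \<inter> E) + m \<le> card (E - S) then G (S - E) else 0)
      = (\<Sum>T\<in>Pow (I - E). \<Sum>S\<in>?fiber k T. if card (S \<inter> E) + m \<le> card (E - S) then G (S - E) else 0)"
    using fin by (intro sum.group[symmetric]) auto
  also have "\<dots> \<le> (\<Sum>T\<in>Pow (I - E). \<Sum>S\<in>?fiber (k + m) T. G (S - E))"
    using fiber_le by (rule sum_mono)
  also have "\<dots> = (\<Sum>S\<in>?A (k + m). G (S - E))"
    using fin by (intro sum.group) auto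
  finally show ?thesis .
qed

lemma sum_Pow_Un:
  assumes "finite X" "finite Y" "X \<inter> Y = {}"
  shows "(\<Sum>E\<in>Pow (X \<union> Y). h E) = (\<Sum>E1\<in>Pow X. \<Sum>E2\<in>Pow Y. h (E1 \<union> E2))"
proof -
  have inj: "inj_on (\<lambda>(E1, E2). E1 \<union> E2) (Pow X \<times> Pow Y)"
  proof (rule inj_onI, clarify)
    fix E1 E2 F1 F2 assume "E1 \<subseteq> X" "E2 \<subseteq> Y" "F1 \<subseteq> X" "F2 \<subseteq> Y" "E1 \<union> E2 = F1 \<union> F2"
    then have "E1 = (E1 \<union> E2) \<inter> X" "F1 = (F1 \<union> F2) \<inter> X" "E2 = (E1 \<union> E2) \<inter> Y" "F2 = (F1 \<union> F2) \<inter> Y"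
      using assms(3) by auto
    then show "E1 = F1 \<and> E2 = F2" using \<open>E1 \<union> E2 = F1 \<union> F2\<close> by metis
  qed
  have "(\<lambda>(E1, E2). E1 \<union> E2) ` (Pow X \<times> Pow Y) = Pow (X \<union> Y)"
  proof (intro set_eqI iffI)
    fix E assume "E \<in> Pow (X \<union> Y)"
    then have "E = (\<lambda>(E1, E2). E1 \<union> E2) (E \<inter> X, E \<inter> Y)" "(E \<inter> X, E \<inter> Y) \<in> Pow X \<times> Pow Y" by auto
    then show "E \<in> (\<lambda>(E1, E2). E1 \<union> E2) ` (Pow X \<times> Pow Y)" by (rule image_eqI)
  qed auto
  then show ?thesis
    using sum.reindex[OF inj, of h] by (simp add: sum.cartesian_product split_def comp_def)
qed

lemma sum_Pow_card:
  assumes "finite X"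
  shows "(\<Sum>E\<in>Pow X. g (card E)) = (\<Sum>i\<le>card X. real (card X choose i) * g i)"
proof -
  have "(\<Sum>E\<in>Pow X. g (card E)) = (\<Sum>i\<le>card X. \<Sum>E\<in>{E. E \<in> Pow X \<and> card E = i}. g (card E))"
    using assms by (intro sum.group[symmetric]) (auto intro: card_mono)
  also have "\<dots> = (\<Sum>i\<le>card X. real (card X choose i) * g i)"
  proof (rule sum.cong)
    fix i
    have "(\<Sum>E\<in>{E. E \<in> Pow X \<and> card E = i}. g (card E)) = (\<Sum>E\<in>{E. E \<subseteq> X \<and> card E = i}. g i)"
      by (intro sum.cong) auto
    then show "(\<Sum>E\<in>{E. E \<in> Pow X \<and> card E = i}. g (card E)) = real (card X choose i) * g i"
      using n_subsets[OF assms] by simp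
  qed simp
  finally show ?thesis .
qed

definition subset_weight :: "real \<Rightarrow> 'a set \<Rightarrow> 'a set \<Rightarrow> real" where
  "subset_weight s X E = (\<Prod>j\<in>X. if j \<in> E then s else 1 - s)"

lemma subset_weight_nonneg: "0 \<le> s \<Longrightarrow> s \<le> 1 \<Longrightarrow> 0 \<le> subset_weight s X E"
  unfolding subset_weight_def by (intro prod_nonneg) auto

lemma subset_weight_eq_power:
  assumes "finite X" "E \<subseteq> X"
  shows "subset_weight s X E = s ^ card E * (1 - s) ^ (card X - card E)"
proof -
  have "subset_weight s X E = (\<Prod>j\<in>X \<inter> E. s) * (\<Prod>j\<in>X - E. 1 - s)"
    unfolding subset_weight_def using prod.If_cases[OF assms(1), of "\<lambda>j. j \<in> E" "\<lambda>_. s" "\<lambda>_. 1 - s"]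
    by (simp add: Diff_eq)
  also have "X \<inter> E = E" using assms(2) by auto
  finally show ?thesis
    using assms by (simp add: card_Diff_subset finite_subset)
qed

lemma subset_weight_Un:
  assumes "finite X" "finite Y" "X \<inter> Y = {}"
  shows "subset_weight s (X \<union> Y) E = subset_weight s X (E \<inter> X) * subset_weight s Y (E \<inter> Y)"
  unfolding subset_weight_def using assms by (simp add: prod.union_disjoint cong: prod.cong)

text \<open>Choosing every point of I independently with probability s, split I into S and two
  further blocks of sizes k and m; the three counts are binomial.\<close>

lemma sum_subset_weight_eq_matching_prob:
  assumes fin: "finite I" and S: "S \<subseteq> I" "card S = k" and cI: "card I = 2 * k + m"
  shows "(\<Sum>E\<in>Pow I. if card (S \<inter> E) + m \<le> card (E - S) then subset_weight s I E else 0)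
    = matching_prob k m s"
proof -
  have fS: "finite S" using S fin finite_subset by blast
  have "card (I - S) = k + m" using S cI fS by (simp add: card_Diff_subset)
  then obtain A where A: "A \<subseteq> I - S" "card A = k" by (metis le_add1 obtain_subset_with_card_n)
  define R where "R = I - S - A"
  have fA: "finite A" "finite R" using A fin finite_subset by (auto simp: R_def)
  have cR: "card R = m"
    unfolding R_def using \<open>card (I - S) = k + m\<close> A fA by (simp add: card_Diff_subset)
  have I: "I = S \<union> (A \<union> R)" "S \<inter> (A \<union> R) = {}" "A \<inter> R = {}"
    using A S by (auto simp: R_def)
  define F where "F a b c = (if a + m \<le> b + c then 1 else 0)
      * (s ^ a * (1 - s) ^ (k - a)) * (s ^ b * (1 - s) ^ (k - b)) * (s ^ c * (1 - s) ^ (m - c))" for a b c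
  have summand: "(if card (S \<inter> (E1 \<union> (E2 \<union> E3))) + m \<le> card ((E1 \<union> (E2 \<union> E3)) - S)
      then subset_weight s I (E1 \<union> (E2 \<union> E3)) else 0) = F (card E1) (card E2) (card E3)"
    if E: "E1 \<subseteq> S" "E2 \<subseteq> A" "E3 \<subseteq> R" for E1 E2 E3
  proof -
    have fE: "finite E1" "finite E2" "finite E3" using E fS fA by (auto intro: finite_subset)
    have "S \<inter> (E1 \<union> (E2 \<union> E3)) = E1" "(E1 \<union> (E2 \<union> E3)) - S = E2 \<union> E3"
      using E I by auto
    moreover have "card (E2 \<union> E3) = card E2 + card E3"
      using E I fE by (intro card_Un_disjoint) auto
    moreover have "subset_weight s I (E1 \<union> (E2 \<union> E3)) = subset_weight s S E1 * subset_weight s A E2 * subset_weight s R E3"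
    proof -
      have "(E1 \<union> (E2 \<union> E3)) \<inter> S = E1" "(E1 \<union> (E2 \<union> E3)) \<inter> (A \<union> R) = E2 \<union> E3"
        "(E2 \<union> E3) \<inter> A = E2" "(E2 \<union> E3) \<inter> R = E3"
        using E I by auto
      then show ?thesis
        unfolding I(1) using fS fA I by (simp add: subset_weight_Un mult.assoc)
    qed
    ultimately show ?thesis
      using E fS fA S(2) A(2) cR by (simp add: subset_weight_eq_power F_def)
  qed
  let ?\<phi> = "\<lambda>E. if card (S \<inter> E) + m \<le> card (E - S) then subset_weight s I E else 0"
  have "(\<Sum>E\<in>Pow I. ?\<phi> E) = (\<Sum>E1\<in>Pow S. \<Sum>E23\<in>Pow (A \<union> R). ?\<phi> (E1 \<union> E23))"
    using sum_Pow_Un[of S "A \<union> R" ?\<phi>] fS fA I(2) by (simp add: I(1)[symmetric])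
  also have "\<dots> = (\<Sum>E1\<in>Pow S. \<Sum>E2\<in>Pow A. \<Sum>E3\<in>Pow R. ?\<phi> (E1 \<union> (E2 \<union> E3)))"
    using fA I(3) by (intro sum.cong refl sum_Pow_Un)
  also have "\<dots> = (\<Sum>E1\<in>Pow S. \<Sum>E2\<in>Pow A. \<Sum>E3\<in>Pow R. F (card E1) (card E2) (card E3))"
    using summand by (intro sum.cong refl) auto
  also have "\<dots> = (\<Sum>E1\<in>Pow S. \<Sum>E2\<in>Pow A. \<Sum>c\<le>m. real (m choose c) * F (card E1) (card E2) c)"
    using sum_Pow_card[OF fA(2)] cR by simp
  also have "\<dots> = (\<Sum>E1\<in>Pow S. \<Sum>b\<le>k. real (k choose b) * (\<Sum>c\<le>m. real (m choose c) * F (card E1) b c))"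
    using sum_Pow_card[OF fA(1), of "\<lambda>b. \<Sum>c\<le>m. real (m choose c) * F _ b c"] A(2) by simp
  also have "\<dots> = (\<Sum>a\<le>k. real (k choose a) * (\<Sum>b\<le>k. real (k choose b) * (\<Sum>c\<le>m. real (m choose c) * F a b c)))"
    using sum_Pow_card[OF fS, of "\<lambda>a. \<Sum>b\<le>k. real (k choose b) * (\<Sum>c\<le>m. real (m choose c) * F a b c)"] S(2)
    by simp
  also have "\<dots> = matching_prob k m s"
    by (simp add: matching_prob_def sum_distrib_left F_def binom_prob_def algebra_simps)
  finally show ?thesis .
qed

section \<open>Expanding product densities\<close>

definition coupled_prod ::
  "(real \<Rightarrow> real) \<Rightarrow> (real \<Rightarrow> real) \<Rightarrow> (real \<Rightarrow> real) \<Rightarrow> 'i set \<Rightarrow> 'i set \<Rightarrow> 'i set \<Rightarrow> ('i \<Rightarrow> real) \<Rightarrow> real"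
  where "coupled_prod a b0 b1 I E T x = (\<Prod>j\<in>I. if j \<in> E then a (x j) else if j \<in> T then b1 (x j) else b0 (x j))"

lemma coupled_prod_nonneg:
  "(\<And>y. 0 \<le> a y) \<Longrightarrow> (\<And>y. 0 \<le> b0 y) \<Longrightarrow> (\<And>y. 0 \<le> b1 y) \<Longrightarrow> 0 \<le> coupled_prod a b0 b1 I E T x"
  unfolding coupled_prod_def by (intro prod_nonneg) auto

lemma prod_add_eq_sum_coupled_prod:
  assumes "finite I"
  shows "(\<Prod>j\<in>I. a (x j) + (if j \<in> S then b1 (x j) else b0 (x j))) = (\<Sum>E\<in>Pow I. coupled_prod a b0 b1 I E (S - E) x)"
proof -
  have "(\<Prod>j\<in>I. a (x j) + (if j \<in> S then b1 (x j) else b0 (x j)))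
      = (\<Sum>E\<in>Pow I. (\<Prod>j\<in>E. a (x j)) * (\<Prod>j\<in>I - E. if j \<in> S then b1 (x j) else b0 (x j)))"
    by (rule prod_add[OF assms])
  also have "\<dots> = (\<Sum>E\<in>Pow I. coupled_prod a b0 b1 I E (S - E) x)"
  proof (rule sum.cong)
    fix E assume E: "E \<in> Pow I"
    have "coupled_prod a b0 b1 I E (S - E) x
        = (\<Prod>j\<in>I - E. if j \<in> E then a (x j) else if j \<in> S - E then b1 (x j) else b0 (x j))
        * (\<Prod>j\<in>E. if j \<in> E then a (x j) else if j \<in> S - E then b1 (x j) else b0 (x j))"
      unfolding coupled_prod_def using E assms by (intro prod.subset_diff) auto
    also have "\<dots> = (\<Prod>j\<in>I - E. if j \<in> S then b1 (x j) else b0 (x j)) * (\<Prod>j\<in>E. a (x j))"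
      by (intro arg_cong2[where f = "(*)"] prod.cong) auto
    finally show "(\<Prod>j\<in>E. a (x j)) * (\<Prod>j\<in>I - E. if j \<in> S then b1 (x j) else b0 (x j))
        = coupled_prod a b0 b1 I E (S - E) x"
      by (simp add: mult.commute)
  qed simp
  finally show ?thesis .
qed

lemma nn_integral_coupled_prod:
  fixes I :: "'i set"
  assumes "finite I" "0 \<le> s" "s \<le> 1"
    and [measurable]: "a \<in> borel_measurable borel" "b0 \<in> borel_measurable borel" "b1 \<in> borel_measurable borel"
    and nonneg: "\<And>y. 0 \<le> a y" "\<And>y. 0 \<le> b0 y" "\<And>y. 0 \<le> b1 y"
    and mass: "(\<integral>\<^sup>+y. ennreal (a y) \<partial>lborel) = ennreal s"
      "(\<integral>\<^sup>+y. ennreal (b0 y) \<partial>lborel) = ennreal (1 - s)"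
      "(\<integral>\<^sup>+y. ennreal (b1 y) \<partial>lborel) = ennreal (1 - s)"
  shows "(\<integral>\<^sup>+x. ennreal (coupled_prod a b0 b1 I E T x) \<partial>PiM I (\<lambda>_. lborel)) = ennreal (subset_weight s I E)"
proof -
  interpret product_sigma_finite "\<lambda>_::'i. lborel::real measure" by unfold_locales
  define g where "g j y = (if j \<in> E then a y else if j \<in> T then b1 y else b0 y)" for j y
  have g_nonneg: "0 \<le> g j y" for j y using nonneg by (simp add: g_def)
  have "(\<integral>\<^sup>+x. ennreal (coupled_prod a b0 b1 I E T x) \<partial>PiM I (\<lambda>_. lborel))
     = (\<integral>\<^sup>+x. (\<Prod>j\<in>I. ennreal (g j (x j))) \<partial>PiM I (\<lambda>_. lborel))"
    unfolding coupled_prod_def g_def[symmetric] using g_nonneg by (intro nn_integral_cong) (simp add: prod_ennreal)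
  also have "\<dots> = (\<Prod>j\<in>I. \<integral>\<^sup>+y. ennreal (g j y) \<partial>lborel)"
    by (intro product_nn_integral_prod assms(1)) (simp add: g_def)
  also have "\<dots> = (\<Prod>j\<in>I. ennreal (if j \<in> E then s else 1 - s))"
  proof (rule prod.cong)
    fix j show "(\<integral>\<^sup>+y. ennreal (g j y) \<partial>lborel) = ennreal (if j \<in> E then s else 1 - s)"
      by (cases "j \<in> E"; cases "j \<in> T") (simp_all add: g_def mass)
  qed simp
  also have "\<dots> = ennreal (subset_weight s I E)"
    unfolding subset_weight_def using assms(2,3) by (subst prod_ennreal) auto
  finally show ?thesis .
qed

text \<open>With p0 = a + b0 and p1 = a + b1, these are the terms of the expanded mixture over k-subsets S
  of the product densities "p1 on S, p0 elsewhere" that, for card I = 2 * k + m, also occur in the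
  mixture of "p0 on Q, p1 elsewhere".\<close>

definition mixture_overlap ::
  "(real \<Rightarrow> real) \<Rightarrow> (real \<Rightarrow> real) \<Rightarrow> (real \<Rightarrow> real) \<Rightarrow> 'i set \<Rightarrow> nat \<Rightarrow> nat \<Rightarrow> ('i \<Rightarrow> real) \<Rightarrow> real"
  where "mixture_overlap a b0 b1 I k m x = (\<Sum>S\<in>{S. S \<subseteq> I \<and> card S = k}. \<Sum>E\<in>Pow I.
      if card (S \<inter> E) + m \<le> card (E - S) then coupled_prod a b0 b1 I E (S - E) x else 0)"

lemma mixture_overlap_le_mixture:
  assumes "finite I" and nonneg: "\<And>y. 0 \<le> a y" "\<And>y. 0 \<le> b0 y" "\<And>y. 0 \<le> b1 y"
    and p: "\<And>y. p0 y = a y + b0 y" "\<And>y. p1 y = a y + b1 y"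
  shows "mixture_overlap a b0 b1 I k m x
    \<le> (\<Sum>S\<in>{S. S \<subseteq> I \<and> card S = k}. \<Prod>j\<in>I. if j \<in> S then p1 (x j) else p0 (x j))"
  unfolding mixture_overlap_def
proof (rule sum_mono)
  fix S
  have "0 \<le> coupled_prod a b0 b1 I E T x" for E T by (intro coupled_prod_nonneg nonneg)
  have "(\<Prod>j\<in>I. if j \<in> S then p1 (x j) else p0 (x j)) = (\<Sum>E\<in>Pow I. coupled_prod a b0 b1 I E (S - E) x)"
    unfolding prod_add_eq_sum_coupled_prod[OF assms(1), symmetric] by (intro prod.cong) (auto simp: p)
  then show "(\<Sum>E\<in>Pow I. if card (S \<inter> E) + m \<le> card (E - S) then coupled_prod a b0 b1 I E (S - E) x else 0)
      \<le> (\<Prod>j\<in>I. if j \<in> S then p1 (x j) else p0 (x j))"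
    using \<open>\<And>E T. 0 \<le> coupled_prod a b0 b1 I E T x\<close> by (auto intro: sum_mono)
qed

lemma mixture_overlap_le_mixture_swapped:
  assumes "finite I" "card I = 2 * k + m" and nonneg: "\<And>y. 0 \<le> a y" "\<And>y. 0 \<le> b0 y" "\<And>y. 0 \<le> b1 y"
    and p: "\<And>y. p0 y = a y + b0 y" "\<And>y. p1 y = a y + b1 y"
  shows "mixture_overlap a b0 b1 I k m x
    \<le> (\<Sum>Q\<in>{S. S \<subseteq> I \<and> card S = k}. \<Prod>j\<in>I. if j \<in> Q then p0 (x j) else p1 (x j))"
proof -
  let ?A = "{S. S \<subseteq> I \<and> card S = k}" and ?B = "{S. S \<subseteq> I \<and> card S = k + m}"
  have "card (I - Q) = card I - card Q" if "Q \<subseteq> I" for Q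
    using that assms(1) by (intro card_Diff_subset) (auto intro: finite_subset)
  then have bij: "bij_betw (\<lambda>Q. I - Q) ?A ?B"
    using assms(2) by (intro bij_betw_byWitness[where f' = "\<lambda>Q. I - Q"]) auto
  have "0 \<le> coupled_prod a b0 b1 I E T x" for E T by (intro coupled_prod_nonneg nonneg)
  have "mixture_overlap a b0 b1 I k m x
      = (\<Sum>E\<in>Pow I. \<Sum>S\<in>?A. if card (S \<inter> E) + m \<le> card (E - S) then coupled_prod a b0 b1 I E (S - E) x else 0)"
    unfolding mixture_overlap_def by (rule sum.swap)
  also have "\<dots> \<le> (\<Sum>E\<in>Pow I. \<Sum>S\<in>?B. coupled_prod a b0 b1 I E (S - E) x)"
    using assms(1,2) \<open>\<And>E T. 0 \<le> coupled_prod a b0 b1 I E T x\<close>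
    by (intro sum_mono sum_subsets_trace_le[where G = "\<lambda>T. coupled_prod a b0 b1 I _ T x"]) auto
  also have "\<dots> = (\<Sum>S\<in>?B. \<Sum>E\<in>Pow I. coupled_prod a b0 b1 I E (S - E) x)"
    by (rule sum.swap)
  also have "\<dots> = (\<Sum>Q\<in>?A. \<Sum>E\<in>Pow I. coupled_prod a b0 b1 I E ((I - Q) - E) x)"
    using sum.reindex_bij_betw[OF bij, of "\<lambda>S. \<Sum>E\<in>Pow I. coupled_prod a b0 b1 I E (S - E) x"] by simp
  also have "\<dots> = (\<Sum>Q\<in>?A. \<Prod>j\<in>I. if j \<in> Q then p0 (x j) else p1 (x j))"
    unfolding prod_add_eq_sum_coupled_prod[OF assms(1), symmetric] by (intro sum.cong prod.cong) (auto simp: p)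
  finally show ?thesis .
qed

section \<open>The two-point argument\<close>

lemma ennreal_eq_one_minus:
  assumes "ennreal s + X = 1" "0 \<le> s" "s \<le> 1"
  shows "X = ennreal (1 - s)"
proof -
  have "X \<le> 1" unfolding assms(1)[symmetric] by (rule add_increasing) auto
  then have "X \<noteq> \<top>" using ennreal_one_less_top by (metis top.not_eq_extremum order.strict_trans1)
  then obtain x where x: "X = ennreal x" "0 \<le> x" by (cases X) auto
  then have "ennreal (s + x) = ennreal 1" using assms by (simp add: ennreal_plus)
  then have "s + x = 1" using x assms(2) by (subst (asm) ennreal_inj) auto
  then show ?thesis using x by simp
qed

lemma normal_densities_common_part:
  assumes s: "0 \<le> s" "s \<le> 1" and overlap: "ennreal s \<le> (\<integral>\<^sup>+x. ennreal (min_normal_density \<delta> x) \<partial>lborel)"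
  obtains a b0 b1 :: "real \<Rightarrow> real"
  where "a \<in> borel_measurable borel" "b0 \<in> borel_measurable borel" "b1 \<in> borel_measurable borel"
    "\<And>y. 0 \<le> a y" "\<And>y. 0 \<le> b0 y" "\<And>y. 0 \<le> b1 y"
    "\<And>y. normal_density 0 1 y = a y + b0 y" "\<And>y. normal_density \<delta> 1 y = a y + b1 y"
    "(\<integral>\<^sup>+y. ennreal (a y) \<partial>lborel) = ennreal s"
    "(\<integral>\<^sup>+y. ennreal (b0 y) \<partial>lborel) = ennreal (1 - s)"
    "(\<integral>\<^sup>+y. ennreal (b1 y) \<partial>lborel) = ennreal (1 - s)"
proof -
  obtain r where r: "(\<integral>\<^sup>+x. ennreal (min_normal_density \<delta> x) \<partial>lborel) = ennreal r" "0 \<le> r"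
    by (rule nn_integral_min_normal_density_finite)
  have "s \<le> r" using overlap r s by simp
  define c where "c = s / r"
  have c: "0 \<le> c" "c \<le> 1" "c * r = s" using \<open>s \<le> r\<close> r s by (auto simp: c_def divide_le_eq_1)
  define a where "a y = c * min_normal_density \<delta> y" for y
  have a_le: "a y \<le> normal_density 0 1 y" "a y \<le> normal_density \<delta> 1 y" for y
    using c min_normal_density_bounds[of \<delta> y] unfolding a_def by (auto intro: mult_left_le_one_le order_trans)
  have a_meas[measurable]: "a \<in> borel_measurable borel" unfolding a_def by measurable
  have a_nonneg: "0 \<le> a y" for y using c min_normal_density_bounds[of \<delta> y] by (simp add: a_def)
  have a_mass: "(\<integral>\<^sup>+y. ennreal (a y) \<partial>lborel) = ennreal s"
  proof -
    have "(\<integral>\<^sup>+y. ennreal (a y) \<partial>lborel) = (\<integral>\<^sup>+y. ennreal c * ennreal (min_normal_density \<delta> y) \<partial>lborel)"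
      unfolding a_def using c by (intro nn_integral_cong) (simp add: ennreal_mult min_normal_density_bounds)
    also have "\<dots> = ennreal c * ennreal r" by (simp add: nn_integral_cmult r(1))
    finally show ?thesis using c r(2) by (simp add: ennreal_mult[symmetric])
  qed
  have rest_mass: "(\<integral>\<^sup>+y. ennreal (normal_density \<mu> 1 y - a y) \<partial>lborel) = ennreal (1 - s)"
    if "\<And>y. a y \<le> normal_density \<mu> 1 y" for \<mu>
  proof (rule ennreal_eq_one_minus[OF _ s])
    have "ennreal s + (\<integral>\<^sup>+y. ennreal (normal_density \<mu> 1 y - a y) \<partial>lborel)
        = (\<integral>\<^sup>+y. ennreal (a y) + ennreal (normal_density \<mu> 1 y - a y) \<partial>lborel)"
      unfolding a_mass[symmetric] by (rule nn_integral_add[symmetric]) auto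
    also have "\<dots> = (\<integral>\<^sup>+y. ennreal (normal_density \<mu> 1 y) \<partial>lborel)"
      using a_nonneg that by (intro nn_integral_cong) (simp add: ennreal_plus[symmetric])
    finally show "ennreal s + (\<integral>\<^sup>+y. ennreal (normal_density \<mu> 1 y - a y) \<partial>lborel) = 1"
      by (simp add: nn_integral_normal_density)
  qed
  show ?thesis
    by (rule that[of a "\<lambda>y. normal_density 0 1 y - a y" "\<lambda>y. normal_density \<delta> 1 y - a y"])
      (use a_nonneg a_le a_mass rest_mass in auto)
qed

lemma space_obs_model: "space (obs_model n \<theta> \<gamma>) = space (PiM {0..<n} (\<lambda>_. lborel::real measure))"
  by (simp add: obs_model_def space_PiM)

lemma prob_space_obs_model: "prob_space (obs_model n \<theta> \<gamma>)"
  unfolding obs_model_def by (intro prob_space_PiM prob_space_normal_density) simp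

lemma emeasure_obs_model:
  assumes "B \<in> sets (PiM {0..<n} (\<lambda>_. lborel))"
  shows "emeasure (obs_model n \<theta> \<gamma>) B =
    (\<integral>\<^sup>+x. ennreal (\<Prod>j\<in>{0..<n}. normal_density (\<theta> + \<gamma> j) 1 (x j)) * indicator B x \<partial>PiM {0..<n} (\<lambda>_. lborel))"
  unfolding obs_model_def PiM_normal_density_eq_density[of "{0..<n}" 1 "\<lambda>j. \<theta> + \<gamma> j", simplified]
  using assms by (subst emeasure_density) (auto simp: prod_ennreal)

lemma l0norm_indicator_le:
  assumes "S \<subseteq> {0..<n}" "card S = k"
  shows "l0norm n (\<lambda>j. if j \<in> S then c else 0) \<le> k"
proof -
  have "card {j \<in> {0..<n}. (if j \<in> S then c else 0) \<noteq> 0} \<le> card S"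
    using assms finite_subset by (intro card_mono) auto
  then show ?thesis using assms unfolding l0norm_def by simp
qed

lemma nn_integral_mixture_overlap:
  fixes I :: "'i set"
  assumes I: "finite I" "card I = 2 * k + m" and s: "0 \<le> s" "s \<le> 1"
    and [measurable]: "a \<in> borel_measurable borel" "b0 \<in> borel_measurable borel" "b1 \<in> borel_measurable borel"
    and nonneg: "\<And>y. 0 \<le> a y" "\<And>y. 0 \<le> b0 y" "\<And>y. 0 \<le> b1 y"
    and mass: "(\<integral>\<^sup>+y. ennreal (a y) \<partial>lborel) = ennreal s"
      "(\<integral>\<^sup>+y. ennreal (b0 y) \<partial>lborel) = ennreal (1 - s)"
      "(\<integral>\<^sup>+y. ennreal (b1 y) \<partial>lborel) = ennreal (1 - s)"
  shows "(\<integral>\<^sup>+x. ennreal (mixture_overlap a b0 b1 I k m x) \<partial>PiM I (\<lambda>_. lborel))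
    = ennreal (real (card {S. S \<subseteq> I \<and> card S = k}) * matching_prob k m s)"
proof -
  let ?A = "{S. S \<subseteq> I \<and> card S = k}"
  let ?cond = "\<lambda>S E. card (S \<inter> E) + m \<le> card (E - S)"
  have cp_nonneg: "0 \<le> coupled_prod a b0 b1 I E T x" for E T x by (intro coupled_prod_nonneg nonneg)
  have [measurable]: "(\<lambda>x. coupled_prod a b0 b1 I E T x) \<in> borel_measurable (PiM I (\<lambda>_. lborel))" for E T
    unfolding coupled_prod_def by measurable
  have "(\<integral>\<^sup>+x. ennreal (mixture_overlap a b0 b1 I k m x) \<partial>PiM I (\<lambda>_. lborel))
     = (\<integral>\<^sup>+x. (\<Sum>S\<in>?A. \<Sum>E\<in>Pow I. ennreal (if ?cond S E then coupled_prod a b0 b1 I E (S - E) x else 0)) \<partial>PiM I (\<lambda>_. lborel))"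
    unfolding mixture_overlap_def using cp_nonneg by (intro nn_integral_cong) (simp add: sum_nonneg)
  also have "\<dots> = (\<Sum>S\<in>?A. \<Sum>E\<in>Pow I. \<integral>\<^sup>+x. ennreal (if ?cond S E then coupled_prod a b0 b1 I E (S - E) x else 0) \<partial>PiM I (\<lambda>_. lborel))"
    by (simp add: nn_integral_sum)
  also have "\<dots> = (\<Sum>S\<in>?A. \<Sum>E\<in>Pow I. ennreal (if ?cond S E then subset_weight s I E else 0))"
    using nn_integral_coupled_prod[OF I(1) s, of a b0 b1] nonneg mass
    by (intro sum.cong refl) auto
  also have "\<dots> = ennreal (\<Sum>S\<in>?A. \<Sum>E\<in>Pow I. if ?cond S E then subset_weight s I E else 0)"
    by (simp add: sum_nonneg subset_weight_nonneg[OF s])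
  also have "\<dots> = ennreal (\<Sum>S\<in>?A. matching_prob k m s)"
    using sum_subset_weight_eq_matching_prob[OF I(1) _ _ I(2)] by simp
  finally show ?thesis by simp
qed

text \<open>If 2 t < \<delta>, no point estimate is within distance t of both 0 and \<delta>; so at every x one
  of the two mixtures is charged with an error, and both dominate the overlap.\<close>

lemma mixture_overlap_le_error_sum:
  fixes n k m :: nat and t \<delta> :: real and f :: "(nat \<Rightarrow> real) \<Rightarrow> real"
  defines "A \<equiv> {S. S \<subseteq> {0..<n} \<and> card S = k}"
    and "B \<equiv> \<lambda>\<theta>. {x \<in> space (PiM {0..<n} (\<lambda>_. lborel::real measure)). t < \<bar>f x - \<theta>\<bar>}"
  assumes "n = 2 * k + m" "2 * t < \<delta>" and f[measurable]: "f \<in> borel_measurable (PiM {0..<n} (\<lambda>_. lborel))"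
    and [measurable]: "a \<in> borel_measurable borel" "b0 \<in> borel_measurable borel" "b1 \<in> borel_measurable borel"
    and nonneg: "\<And>y. 0 \<le> a y" "\<And>y. 0 \<le> b0 y" "\<And>y. 0 \<le> b1 y"
    and split: "\<And>y. normal_density 0 1 y = a y + b0 y" "\<And>y. normal_density \<delta> 1 y = a y + b1 y"
  shows "(\<integral>\<^sup>+x. ennreal (mixture_overlap a b0 b1 {0..<n} k m x) \<partial>PiM {0..<n} (\<lambda>_. lborel))
    \<le> (\<Sum>S\<in>A. emeasure (obs_model n 0 (\<lambda>j. if j \<in> S then \<delta> else 0)) (B 0))
      + (\<Sum>Q\<in>A. emeasure (obs_model n \<delta> (\<lambda>j. if j \<in> Q then - \<delta> else 0)) (B \<delta>))"
proof -
  let ?I = "{0..<n}" and ?L = "PiM {0..<n} (\<lambda>_. lborel::real measure)"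
  define q0 where "q0 S x = (\<Prod>j\<in>?I. if j \<in> S then normal_density \<delta> 1 (x j) else normal_density 0 1 (x j))" for S x
  define q1 where "q1 Q x = (\<Prod>j\<in>?I. if j \<in> Q then normal_density 0 1 (x j) else normal_density \<delta> 1 (x j))" for Q x
  have [measurable]: "q0 S \<in> borel_measurable ?L" "q1 S \<in> borel_measurable ?L" for S
    unfolding q0_def q1_def by measurable
  have q_nonneg: "0 \<le> q0 S x" "0 \<le> q1 S x" for S x unfolding q0_def q1_def by (auto intro: prod_nonneg)
  have [measurable]: "B \<theta> \<in> sets ?L" for \<theta> unfolding B_def by measurable
  have "(\<Prod>j\<in>?I. normal_density (0 + (if j \<in> S then \<delta> else 0)) 1 (x j)) = q0 S x"
    "(\<Prod>j\<in>?I. normal_density (\<delta> + (if j \<in> S then - \<delta> else 0)) 1 (x j)) = q1 S x" for S x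
    unfolding q0_def q1_def by (auto intro: prod.cong)
  then have em0: "emeasure (obs_model n 0 (\<lambda>j. if j \<in> S then \<delta> else 0)) (B 0) = (\<integral>\<^sup>+x. ennreal (q0 S x) * indicator (B 0) x \<partial>?L)"
    and em1: "emeasure (obs_model n \<delta> (\<lambda>j. if j \<in> S then - \<delta> else 0)) (B \<delta>) = (\<integral>\<^sup>+x. ennreal (q1 S x) * indicator (B \<delta>) x \<partial>?L)"
    for S by (simp_all add: emeasure_obs_model)
  have "ennreal (mixture_overlap a b0 b1 ?I k m x)
      \<le> (\<Sum>S\<in>A. ennreal (q0 S x) * indicator (B 0) x) + (\<Sum>Q\<in>A. ennreal (q1 Q x) * indicator (B \<delta>) x)"
    if x: "x \<in> space ?L" for x
  proof -
    have "x \<in> B 0 \<or> x \<in> B \<delta>" using x assms(4) by (auto simp: B_def)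
    moreover have "mixture_overlap a b0 b1 ?I k m x \<le> (\<Sum>S\<in>A. q0 S x)"
      unfolding q0_def A_def by (rule mixture_overlap_le_mixture) (use nonneg split in auto)
    moreover have "mixture_overlap a b0 b1 ?I k m x \<le> (\<Sum>Q\<in>A. q1 Q x)"
      unfolding q1_def A_def by (rule mixture_overlap_le_mixture_swapped) (use nonneg split assms(3) in auto)
    ultimately show ?thesis
      using q_nonneg by (auto simp: sum_nonneg intro: add_increasing add_increasing2 ennreal_leI)
  qed
  then have "(\<integral>\<^sup>+x. ennreal (mixture_overlap a b0 b1 ?I k m x) \<partial>?L)
      \<le> (\<integral>\<^sup>+x. (\<Sum>S\<in>A. ennreal (q0 S x) * indicator (B 0) x) + (\<Sum>Q\<in>A. ennreal (q1 Q x) * indicator (B \<delta>) x) \<partial>?L)"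
    by (intro nn_integral_mono) auto
  also have "\<dots> = (\<Sum>S\<in>A. \<integral>\<^sup>+x. ennreal (q0 S x) * indicator (B 0) x \<partial>?L) + (\<Sum>Q\<in>A. \<integral>\<^sup>+x. ennreal (q1 Q x) * indicator (B \<delta>) x \<partial>?L)"
    by (simp add: nn_integral_add nn_integral_sum)
  finally show ?thesis by (simp add: em0 em1)
qed

lemma exists_ge_average:
  fixes g :: "'a \<Rightarrow> real"
  assumes "finite A" "A \<noteq> {}" "real (card A) * c \<le> (\<Sum>S\<in>A. g S)"
  shows "\<exists>S\<in>A. c \<le> g S"
proof (rule ccontr)
  assume "\<not> (\<exists>S\<in>A. c \<le> g S)"
  then have "(\<Sum>S\<in>A. g S) < (\<Sum>S\<in>A. c)" using assms(1,2) by (intro sum_strict_mono) auto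
  then show False using assms(3) by simp
qed

lemma error_sum_ge_matching_prob:
  fixes n k m :: nat and t \<delta> s :: real and f :: "(nat \<Rightarrow> real) \<Rightarrow> real"
  defines "A \<equiv> {S. S \<subseteq> {0..<n} \<and> card S = k}"
    and "B \<equiv> \<lambda>\<theta>. {x \<in> space (PiM {0..<n} (\<lambda>_. lborel::real measure)). t < \<bar>f x - \<theta>\<bar>}"
  assumes "n = 2 * k + m" "2 * t < \<delta>" and s: "0 \<le> s" "s \<le> 1"
    and overlap: "ennreal s \<le> (\<integral>\<^sup>+x. ennreal (min_normal_density \<delta> x) \<partial>lborel)"
    and f: "f \<in> borel_measurable (PiM {0..<n} (\<lambda>_. lborel))"
  shows "real (card A) * matching_prob k m s \<le> (\<Sum>S\<in>A.
    measure (obs_model n 0 (\<lambda>j. if j \<in> S then \<delta> else 0)) (B 0)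
    + measure (obs_model n \<delta> (\<lambda>j. if j \<in> S then - \<delta> else 0)) (B \<delta>))"
proof -
  obtain a b0 b1 where [measurable]: "a \<in> borel_measurable borel" "b0 \<in> borel_measurable borel" "b1 \<in> borel_measurable borel"
    and nonneg: "\<And>y. 0 \<le> a y" "\<And>y. 0 \<le> b0 y" "\<And>y. 0 \<le> b1 y"
    and split: "\<And>y. normal_density 0 1 y = a y + b0 y" "\<And>y. normal_density \<delta> 1 y = a y + b1 y"
    and mass: "(\<integral>\<^sup>+y. ennreal (a y) \<partial>lborel) = ennreal s"
      "(\<integral>\<^sup>+y. ennreal (b0 y) \<partial>lborel) = ennreal (1 - s)"
      "(\<integral>\<^sup>+y. ennreal (b1 y) \<partial>lborel) = ennreal (1 - s)"
    using normal_densities_common_part[OF s overlap] by blast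
  define err0 where "err0 S = measure (obs_model n 0 (\<lambda>j. if j \<in> S then \<delta> else 0)) (B 0)" for S
  define err1 where "err1 Q = measure (obs_model n \<delta> (\<lambda>j. if j \<in> Q then - \<delta> else 0)) (B \<delta>)" for Q
  have emeasure_eq: "emeasure (obs_model n \<theta> \<gamma>) X = ennreal (measure (obs_model n \<theta> \<gamma>) X)" for \<theta> \<gamma> X
    using prob_space_obs_model by (rule finite_measure.emeasure_eq_measure[OF prob_space.finite_measure])
  have "ennreal (real (card A) * matching_prob k m s)
      \<le> (\<Sum>S\<in>A. emeasure (obs_model n 0 (\<lambda>j. if j \<in> S then \<delta> else 0)) (B 0))
        + (\<Sum>Q\<in>A. emeasure (obs_model n \<delta> (\<lambda>j. if j \<in> Q then - \<delta> else 0)) (B \<delta>))"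
    unfolding A_def B_def
    using mixture_overlap_le_error_sum[OF assms(3,4) f _ _ _ nonneg split]
      nn_integral_mixture_overlap[of "{0..<n}" k m, OF _ _ s _ _ _ nonneg mass] assms(3)
    by simp
  also have "\<dots> = (\<Sum>S\<in>A. ennreal (err0 S)) + (\<Sum>Q\<in>A. ennreal (err1 Q))"
    unfolding emeasure_eq err0_def err1_def ..
  also have "\<dots> = ennreal (\<Sum>S\<in>A. err0 S + err1 S)"
    by (simp add: err0_def err1_def sum_nonneg sum.distrib ennreal_plus)
  finally show ?thesis
    by (simp add: err0_def err1_def sum_nonneg)
qed

lemma exists_parameter_with_large_error:
  fixes n k m :: nat and t \<delta> s :: real and f :: "(nat \<Rightarrow> real) \<Rightarrow> real"
  assumes "n = 2 * k + m" "2 * t < \<delta>" "0 \<le> s" "s \<le> 1"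
    and "ennreal s \<le> (\<integral>\<^sup>+x. ennreal (min_normal_density \<delta> x) \<partial>lborel)"
    and f: "f \<in> borel_measurable (PiM {0..<n} (\<lambda>_. borel))"
  shows "\<exists>p\<in>{(\<theta>, \<gamma>). l0norm n \<gamma> \<le> k}. matching_prob k m s / 2 \<le> measure (obs_model n (fst p) (snd p))
            {x \<in> space (obs_model n (fst p) (snd p)). t < \<bar>f x - fst p\<bar>}"
proof -
  let ?A = "{S. S \<subseteq> {0..<n} \<and> card S = k}"
  define B where "B \<theta> = {x \<in> space (PiM {0..<n} (\<lambda>_. lborel::real measure)). t < \<bar>f x - \<theta>\<bar>}" for \<theta>
  define err0 where "err0 S = measure (obs_model n 0 (\<lambda>j. if j \<in> S then \<delta> else 0)) (B 0)" for S
  define err1 where "err1 Q = measure (obs_model n \<delta> (\<lambda>j. if j \<in> Q then - \<delta> else 0)) (B \<delta>)" for Q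
  have "measurable (PiM {0..<n} (\<lambda>_. lborel)) borel = measurable (PiM {0..<n} (\<lambda>_. borel)) (borel :: real measure)"
    by (rule measurable_cong_sets) (auto intro!: sets_PiM_cong)
  then have "f \<in> borel_measurable (PiM {0..<n} (\<lambda>_. lborel))" using f by simp
  from error_sum_ge_matching_prob[OF assms(1-5) this]
  have "real (card ?A) * matching_prob k m s \<le> (\<Sum>S\<in>?A. err0 S + err1 S)"
    by (simp add: err0_def err1_def B_def)
  moreover have "?A \<noteq> {}"
    using obtain_subset_with_card_n[of k "{0..<n}"] assms(1) by auto
  moreover have "finite ?A" by simp
  ultimately obtain S where "S \<in> ?A" "matching_prob k m s \<le> err0 S + err1 S"
    using exists_ge_average[of ?A "matching_prob k m s" "\<lambda>S. err0 S + err1 S"] by blast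
  then have S: "S \<subseteq> {0..<n}" "card S = k" "matching_prob k m s / 2 \<le> err0 S \<or> matching_prob k m s / 2 \<le> err1 S"
    by auto
  from S(3) show ?thesis
  proof
    assume "matching_prob k m s / 2 \<le> err0 S"
    then show ?thesis
      using l0norm_indicator_le[OF S(1,2), of \<delta>]
      by (intro bexI[of _ "(0, \<lambda>j. if j \<in> S then \<delta> else 0)"]) (auto simp: err0_def B_def space_obs_model)
  next
    assume "matching_prob k m s / 2 \<le> err1 S"
    then show ?thesis
      using l0norm_indicator_le[OF S(1,2), of "- \<delta>"]
      by (intro bexI[of _ "(\<delta>, \<lambda>j. if j \<in> S then - \<delta> else 0)"]) (auto simp: err1_def B_def space_obs_model)
  qed
qed

section \<open>Choice of the separation\<close>

definition separated_overlap :: "nat \<Rightarrow> nat \<Rightarrow> real \<Rightarrow> bool" where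
  "separated_overlap k m t \<longleftrightarrow> (\<exists>\<delta> s. 2 * t < \<delta> \<and> 0 \<le> s \<and> s \<le> 1 \<and>
     ennreal s \<le> (\<integral>\<^sup>+x. ennreal (min_normal_density \<delta> x) \<partial>lborel) \<and> 3/16 \<le> matching_prob k m s)"

lemma div_le_std_normal_density_sqrt_ln:
  assumes "10^7 \<le> y"
  shows "8000 / y \<le> normal_density 0 1 (sqrt (ln (1 + y)) / 2 + 1)"
proof -
  define z where "z = exp (ln (1 + y) / 4)"
  have z4: "z ^ 4 = 1 + y"
    using assms unfolding z_def by (simp add: exp_of_nat_mult[symmetric])
  have "72000 * z \<le> y"
  proof (rule ccontr)
    assume "\<not> 72000 * z \<le> y"
    then have "y ^ 4 < (72000 * z) ^ 4" using assms by (intro power_strict_mono) auto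
    also have "\<dots> = 72000^4 * (1 + y)" by (simp add: power_mult_distrib z4)
    also have "\<dots> \<le> (10^7)^3 * y" using assms by simp
    also have "\<dots> \<le> y^3 * y" using assms by (intro mult_right_mono power_mono) auto
    finally show False by (simp add: power_Suc2[symmetric])
  qed
  then have "8000 / y \<le> 8000 / (72000 * z)"
    using assms by (intro divide_left_mono) (auto simp: z_def)
  also have "\<dots> = exp (- ln (1 + y) / 4) / 9"
    by (simp add: z_def exp_minus field_simps)
  also have "\<dots> \<le> normal_density 0 1 (sqrt (ln (1 + y)) / 2 + 1)"
    using assms by (intro std_normal_density_ge_exp) simp
  finally show ?thesis .
qed

text \<open>For n/m^2 large the separation is sqrt (ln (1 + n/m^2)) itself, and the coupling level s is
  of order m^2/k, so that Bin(k,s) has standard deviation of order m.\<close>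

lemma separated_overlap_large_ratio:
  assumes "n = 2 * k + m" "1 \<le> m" "real n \<le> 4 * real k" and y: "10^7 \<le> real n / (real m)\<^sup>2"
    and t: "2 * t < sqrt (ln (1 + real n / (real m)\<^sup>2))"
  shows "separated_overlap k m t"
proof -
  define y where "y = real n / (real m)\<^sup>2"
  define s where "s = 2000 * (real m)\<^sup>2 / real k"
  have m: "1 \<le> (real m)\<^sup>2" using assms(2) by simp
  have k: "0 < real k" using assms(1-3) by linarith
  have "s \<le> 2000 * (real m)\<^sup>2 / (real n / 4)"
    unfolding s_def using assms(1-3) m by (intro divide_left_mono) auto
  also have "\<dots> = 8000 / y" unfolding y_def using assms(1,2) by (simp add: field_simps)
  finally have s_y: "s \<le> 8000 / y" .
  have y7: "10^7 \<le> y" using y by (simp add: y_def)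
  then have "8000 / y \<le> 8000 / 10^7" by (intro divide_left_mono) auto
  then have "s \<le> 1/2" using s_y by simp
  moreover have "0 < s" unfolding s_def using k assms(2) by (intro divide_pos_pos) auto
  ultimately have s: "0 < s" "s \<le> 1/2" by simp_all
  have "ennreal s \<le> ennreal (normal_density 0 1 (sqrt (ln (1 + y)) / 2 + 1))"
    using s_y div_le_std_normal_density_sqrt_ln[OF y7] by (intro ennreal_leI) simp
  also have "\<dots> \<le> (\<integral>\<^sup>+x. ennreal (min_normal_density (sqrt (ln (1 + y))) x) \<partial>lborel)"
    using y7 by (intro nn_integral_min_normal_density_ge_density) simp
  finally have overlap: "ennreal s \<le> (\<integral>\<^sup>+x. ennreal (min_normal_density (sqrt (ln (1 + y))) x) \<partial>lborel)" .
  have "64 * (2 * real m + 1)\<^sup>2 \<le> 64 * (3 * real m)\<^sup>2"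
    using assms(2) by (intro mult_left_mono power_mono) auto
  also have "\<dots> \<le> 1000 * (real m)\<^sup>2" by (simp add: power_mult_distrib)
  also have "\<dots> = real k * s * (1/2)" using k by (simp add: s_def)
  also have "\<dots> \<le> (real k + 1) * s * (1 - s)"
    using s by (intro mult_mono) auto
  finally have "1/4 \<le> matching_prob k m s"
    using matching_prob_ge_tail[of s m k m] s by (simp add: sum_binom_prob)
  then show ?thesis
    unfolding separated_overlap_def using t s overlap by (intro exI[of _ "sqrt (ln (1 + y))"] exI[of _ s]) (auto simp: y_def)
qed

text \<open>For moderate n/m^2 and large n the separation is a fixed small constant: the coupling keeps
  all but a fraction v of the coordinates common, and Bin(m,s) misses m by at most about 4mv.\<close>

lemma separated_overlap_moderate_ratio:
  assumes "n = 2 * k + m" "1 \<le> m" "real n \<le> 4 * real k" "(real m)\<^sup>2 < 4 * real n"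
    and "2 * 10^10 \<le> real n" and t: "2 * t < 1/524288"
  shows "separated_overlap k m t"
proof -
  have m: "0 < (real m)\<^sup>2" using assms(2) by simp
  have k: "5 * 10^9 \<le> real k" using assms(3,5) by simp
  define v where "v = min (1/2) (real k / (32768 * (real m)\<^sup>2))"
  have "1/16 < real k / (real m)\<^sup>2" using assms(3,4) m by (simp add: less_divide_eq)
  then have "1/524288 \<le> v" by (simp add: v_def field_simps)
  moreover have "v \<le> real k / (32768 * (real m)\<^sup>2)" by (simp add: v_def)
  then have "32768 * (real m)\<^sup>2 * v \<le> real k" using m by (simp add: le_divide_eq mult.commute)
  moreover have "v \<le> 1/2" by (simp add: v_def)
  ultimately have v: "1/524288 \<le> v" "v \<le> 1/2" "32768 * (real m)\<^sup>2 * v \<le> real k"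
    by blast+
  define s where "s = 1 - v"
  have s: "0 < s" "s < 1" using v by (auto simp: s_def)
  have overlap: "ennreal s \<le> (\<integral>\<^sup>+x. ennreal (min_normal_density v x) \<partial>lborel)"
    using v by (intro nn_integral_min_normal_density_ge) (auto simp: s_def)
  define r where "r = nat \<lceil>4 * real m * v\<rceil>"
  have "real r = of_int \<lceil>4 * real m * v\<rceil>" using v unfolding r_def by simp
  then have r: "4 * real m * v \<le> real r" "real r \<le> 4 * real m * v + 1"
    using ceiling_correct[of "4 * real m * v"] by linarith+
  have kv: "4608 \<le> real k * v"
    using mult_mono[OF k v(1)] by simp
  have "64 * (2 * real r + 1)\<^sup>2 \<le> 64 * (8 * real m * v + 3)\<^sup>2"
    using r(2) by (intro mult_left_mono power_mono) auto
  also have "\<dots> \<le> 8192 * (real m)\<^sup>2 * v\<^sup>2 + 1152"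
    using zero_le_power2[of "8 * real m * v - 3"] by (simp add: power2_eq_square algebra_simps)
  also have "\<dots> \<le> real k * v / 4 + real k * v / 4"
  proof -
    have "32768 * (real m)\<^sup>2 * v * v \<le> real k * v" using mult_right_mono[OF v(3), of v] v(1) by simp
    then have "8192 * (real m)\<^sup>2 * v\<^sup>2 \<le> real k * v / 4" by (simp add: power2_eq_square)
    then show ?thesis using kv by linarith
  qed
  also have "\<dots> = real k * v * (1/2)" by simp
  also have "\<dots> \<le> (real k + 1) * v * (1 - v)"
    using v by (intro mult_mono) auto
  also have "\<dots> = (real k + 1) * s * (1 - s)" by (simp add: s_def algebra_simps)
  finally have var: "64 * (2 * real r + 1)\<^sup>2 \<le> (real k + 1) * s * (1 - s)" .
  have "real m * (1 - s) / (real r + 1) \<le> 1/4"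
    using r(1) by (simp add: s_def field_simps)
  then have "3/4 \<le> (\<Sum>c\<le>m. binom_prob m s c * (if m \<le> c + r then 1 else 0))"
    using binom_prob_tail_ge[of s m r] s by linarith
  then have "3/16 \<le> matching_prob k m s"
    using matching_prob_ge_tail[OF s var, of m] by linarith
  then show ?thesis
    unfolding separated_overlap_def using t v s overlap by (intro exI[of _ v] exI[of _ s]) auto
qed

lemma separated_overlap_small_sample:
  assumes "n = 2 * k + m" "1 \<le> m" and t: "2 * t * real n < 1"
  shows "separated_overlap k m t"
proof -
  have n: "1 \<le> real n" using assms by simp
  define s where "s = 1 - 1 / (2 * real n)"
  have s: "0 \<le> s" "s \<le> 1" using n by (auto simp: s_def field_simps)
  have overlap: "ennreal s \<le> (\<integral>\<^sup>+x. ennreal (min_normal_density (1 / real n) x) \<partial>lborel)"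
    using n by (intro nn_integral_min_normal_density_ge) (auto simp: s_def)
  have "1/2 \<le> s ^ n"
    using Bernoulli_inequality[of "- (1 / (2 * real n))" n] n by (simp add: s_def field_simps)
  also have "\<dots> \<le> matching_prob k m s" using power_le_matching_prob[OF s, of k m] assms(1) by simp
  finally have "3/16 \<le> matching_prob k m s" by simp
  moreover have "2 * t < 1 / real n" using t n by (simp add: field_simps)
  ultimately show ?thesis
    unfolding separated_overlap_def using s overlap by (intro exI[of _ "1 / real n"] exI[of _ s]) auto
qed

lemma four_mult_ge_of_gt_half_minus_sqrt:
  assumes "16 \<le> real n" "real n / 2 - sqrt (real n) < real k"
  shows "real n \<le> 4 * real k"
proof -
  have "4 \<le> sqrt (real n)" using real_sqrt_le_mono[OF assms(1)] by simp
  then have "4 * sqrt (real n) \<le> sqrt (real n) * sqrt (real n)" by (intro mult_right_mono) auto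
  then show ?thesis using assms(2) by simp
qed

lemma sq_lt_four_mult_of_gt_half_minus_sqrt:
  assumes "n = 2 * k + m" "real n / 2 - sqrt (real n) < real k"
  shows "(real m)\<^sup>2 < 4 * real n"
proof -
  have "real m = real n - 2 * real k" using assms(1) by simp
  then have "real m < 2 * sqrt (real n)" using assms(2) by linarith
  then have "(real m)\<^sup>2 < (2 * sqrt (real n))\<^sup>2" by (intro power_strict_mono) auto
  then show ?thesis by (simp add: power_mult_distrib)
qed

lemma sqrt_ln_one_plus_le_five:
  assumes "0 \<le> y" "y < 10^7"
  shows "sqrt (ln (1 + y)) \<le> 5"
proof -
  have "1 + y \<le> 2 ^ 25" using assms(2) by simp
  also have "(2::real) ^ 25 \<le> exp 1 ^ 25" using exp_ge_add_one_self[of 1] by (intro power_mono) auto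
  also have "exp 1 ^ 25 = exp (25::real)" by (subst exp_of_nat_mult[symmetric]) simp
  finally have "ln (1 + y) \<le> ln (exp 25)" using assms(1) by (intro ln_mono) auto
  then have "ln (1 + y) \<le> 25" unfolding ln_exp .
  then have "sqrt (ln (1 + y)) \<le> sqrt (5\<^sup>2)" by (intro real_sqrt_le_mono) simp
  then show ?thesis by simp
qed

lemma separated_overlap_rate:
  assumes "n = 2 * k + m" "1 \<le> m" and k: "real n / 2 - sqrt (real n) < real k"
  shows "separated_overlap k m (1 / 10^17 * sqrt (ln (1 + real n / (real m)\<^sup>2)))"
proof -
  define y where "y = real n / (real m)\<^sup>2"
  define t where "t = 1 / 10^17 * sqrt (ln (1 + y))"
  have m: "1 \<le> (real m)\<^sup>2" using assms(2) by simp
  have y: "0 \<le> y" "y \<le> real n"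
    using mult_left_mono[OF m, of "real n"] by (auto simp: y_def divide_le_eq)
  then have "ln (1 + y) \<le> real n" using ln_add_one_self_le_self[of y] by linarith
  have "separated_overlap k m t"
  proof (cases "10^7 \<le> y")
    case True
    moreover have "(16::real) \<le> 10^7" by simp
    ultimately have "16 \<le> real n" using y by linarith
    then have "real n \<le> 4 * real k" using k by (rule four_mult_ge_of_gt_half_minus_sqrt)
    moreover have "2 * t < sqrt (ln (1 + y))" using True by (simp add: t_def)
    ultimately show ?thesis
      using True assms(1,2) by (intro separated_overlap_large_ratio) (auto simp: y_def)
  next
    case small_ratio: False
    show ?thesis
    proof (cases "2 * 10^10 \<le> real n")
      case True
      then have "real n \<le> 4 * real k" using k by (intro four_mult_ge_of_gt_half_minus_sqrt) auto
      have "sqrt (ln (1 + y)) \<le> 5" using y small_ratio by (intro sqrt_ln_one_plus_le_five) auto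
      then have "2 * t < 1/524288" unfolding t_def by simp
      then show ?thesis
        using separated_overlap_moderate_ratio[OF assms(1,2) \<open>real n \<le> 4 * real k\<close>
          sq_lt_four_mult_of_gt_half_minus_sqrt[OF assms(1) k] True]
        by blast
    next
      case False
      have "sqrt (ln (1 + y)) \<le> sqrt (141422\<^sup>2)"
        using \<open>ln (1 + y) \<le> real n\<close> False by (intro real_sqrt_le_mono) simp
      then have "t \<le> 1 / 10^17 * 141422" unfolding t_def by simp
      moreover have "0 \<le> t" unfolding t_def using y by simp
      ultimately have "2 * t * real n \<le> 2 * (1 / 10^17 * 141422) * (2 * 10^10)"
        using False by (intro mult_mono) auto
      then show ?thesis using separated_overlap_small_sample[OF assms(1,2)] by simp
    qed
  qed
  then show ?thesis unfolding t_def y_def .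
qed

lemma minimax_risk_ge:
  fixes n k :: nat and f :: "(nat \<Rightarrow> real) \<Rightarrow> real"
  assumes "real n / 2 - sqrt (real n) < real k" "real k < real n / 2"
    and f: "f \<in> borel_measurable (PiM {0..<n} (\<lambda>_. borel))"
  shows "3/32 \<le> (SUP p \<in> {(\<theta>, \<gamma>). l0norm n \<gamma> \<le> k}. measure (obs_model n (fst p) (snd p))
      {x \<in> space (obs_model n (fst p) (snd p)).
         \<bar>f x - fst p\<bar> > 1 / 10^17 * sqrt (ln (1 + real n / (real n - 2 * real k)\<^sup>2))})"
proof -
  define m where "m = n - 2 * k"
  have m: "n = 2 * k + m" "1 \<le> m" "real n - 2 * real k = real m" using assms(2) by (auto simp: m_def)
  let ?t = "1 / 10^17 * sqrt (ln (1 + real n / (real m)\<^sup>2))"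
  obtain \<delta> s where "2 * ?t < \<delta>" "0 \<le> s" "s \<le> 1"
    "ennreal s \<le> (\<integral>\<^sup>+x. ennreal (min_normal_density \<delta> x) \<partial>lborel)" "3/16 \<le> matching_prob k m s"
    using separated_overlap_rate[OF m(1,2) assms(1)] unfolding separated_overlap_def by blast
  then obtain p where p: "p \<in> {(\<theta>, \<gamma>). l0norm n \<gamma> \<le> k}"
    and "matching_prob k m s / 2 \<le> measure (obs_model n (fst p) (snd p))
      {x \<in> space (obs_model n (fst p) (snd p)). ?t < \<bar>f x - fst p\<bar>}"
    using exists_parameter_with_large_error[OF m(1) _ _ _ _ f] by blast
  then have "3/32 \<le> measure (obs_model n (fst p) (snd p))
      {x \<in> space (obs_model n (fst p) (snd p)). ?t < \<bar>f x - fst p\<bar>}"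
    using \<open>3/16 \<le> matching_prob k m s\<close> by linarith
  moreover have "bdd_above ((\<lambda>p. measure (obs_model n (fst p) (snd p))
      {x \<in> space (obs_model n (fst p) (snd p)). ?t < \<bar>f x - fst p\<bar>}) ` {(\<theta>, \<gamma>). l0norm n \<gamma> \<le> k})"
    by (intro bdd_aboveI2[where M = 1] prob_space.prob_le_1 prob_space_obs_model)
  ultimately show ?thesis unfolding m(3) using p by (intro cSUP_upper2) auto
qed

theorem mainTheorem7:
  shows "\<exists>C>0. \<exists>c>0. \<forall>n k::nat. n \<ge> 2 \<longrightarrow>
           real n / 2 - sqrt (real n) < real k \<longrightarrow> real k < real n / 2 \<longrightarrow>
           (\<forall>f \<in> borel_measurable (PiM {0..<n} (\<lambda>_. borel)).
              c \<le> (SUP p \<in> {(\<theta>, \<gamma>). l0norm n \<gamma> \<le> k}.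
                     measure (obs_model n (fst p) (snd p))
                       {x \<in> space (obs_model n (fst p) (snd p)).
                          \<bar>f x - fst p\<bar> > C * sqrt (ln (1 + real n / (real n - 2 * real k)^2))}))"
  by (intro exI[of _ "1 / 10^17"] exI[of _ "3/32"] conjI allI impI ballI minimax_risk_ge) simp_all

end
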